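(* Let $r\ge 2$ be an integer and let $H$ be a graph with chromatic number $\chi(H)=r+1$. For each $n$, let $ex_{\mu_r}(n,H)$ denote the maximum of the $r$-clique spectral radius $\mu_r(G)$ over all $H$-free simple graphs $G$ on $n$ vertices. Then, as $n\to\infty$, \[ ex_{\mu_{r}}(n,H)=\left(\frac{1}{r^{r-1}}+o(1)\right)n^{r-1}. \]
   Context: All graphs are simple and undirected. A $t$-clique of a graph $G$ is a set of $t$ vertices inducing a complete subgraph; $C_t(G)$ denotes the set of $t$-cliques of $G$. For a graph $G$ with vertex set $\{1,\dots,n\}$, the $t$-clique tensor $\mathcal{A}(G)=(a_{i_1\cdots i_t})$ is the order $t$, dimension $n$ tensor with $a_{i_1 i_2\cdots i_t}=\frac{1}{(t-1)!}$ if $\{i_1,\dots,i_t\}\in C_t(G)$ (in particular the $i_j$ are distinct) and $a_{i_1\cdots i_t}=0$ otherwise. For an order $m$ dimension $n$ tensor $\mathcal{A}$ and $x\in\mathbb{C}^n$, $\mathcal{A}x^{m-1}$ is the vector whose $i$-th component is $\sum_{i_2,\dots,i_m=1}^n a_{i i_2\cdots i_m}x_{i_2}\cdots x_{i_m}$; $\lambda\in\mathbb{C}$ is an eigenvalue of $\mathcal{A}$ if there is a nonzero $x\in\mathbb{C}^n$ with $\mathcal{A}x^{m-1}=\lambda x^{[m-1]}$, where $x^{[m-1]}=(x_1^{m-1},\dots,x_n^{m-1})^T$. The $t$-clique spectral radius $\mu_t(G)$ is the largest modulus of an eigenvalue of the $t$-clique tensor of $G$. A graph is $H$-free if it contains no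 subgraph isomorphic to $H$. *)

theory Defs
  imports Complex_Main
begin

definition simple_graph :: "'a set \<Rightarrow> ('a \<Rightarrow> 'a \<Rightarrow> bool) \<Rightarrow> bool" where
  "simple_graph V E \<longleftrightarrow> finite V \<and> (\<forall>u v. E u v \<longrightarrow> u \<in> V \<and> v \<in> V \<and> u \<noteq> v \<and> E v u)"

definition proper_colouring :: "'a set \<Rightarrow> ('a \<Rightarrow> 'a \<Rightarrow> bool) \<Rightarrow> nat \<Rightarrow> ('a \<Rightarrow> nat) \<Rightarrow> bool" where
  "proper_colouring V E c f \<longleftrightarrow> (\<forall>v\<in>V. f v < c) \<and> (\<forall>u\<in>V. \<forall>v\<in>V. E u v \<longrightarrow> f u \<noteq> f v)"

definition chromatic_number :: "'a set \<Rightarrow> ('a \<Rightarrow> 'a \<Rightarrow> bool) \<Rightarrow> nat" where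
  "chromatic_number V E = (LEAST c. \<exists>f. proper_colouring V E c f)"

definition contains_subgraph :: "nat \<Rightarrow> (nat \<Rightarrow> nat \<Rightarrow> bool) \<Rightarrow> 'a set \<Rightarrow> ('a \<Rightarrow> 'a \<Rightarrow> bool) \<Rightarrow> bool" where
  "contains_subgraph n E VH EH \<longleftrightarrow>
     (\<exists>\<phi>. inj_on \<phi> VH \<and> \<phi> ` VH \<subseteq> {0..<n} \<and> (\<forall>u\<in>VH. \<forall>v\<in>VH. EH u v \<longrightarrow> E (\<phi> u) (\<phi> v)))"

definition H_free :: "nat \<Rightarrow> (nat \<Rightarrow> nat \<Rightarrow> bool) \<Rightarrow> 'a set \<Rightarrow> ('a \<Rightarrow> 'a \<Rightarrow> bool) \<Rightarrow> bool" where
  "H_free n E VH EH \<longleftrightarrow> \<not> contains_subgraph n E VH EH"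

definition is_clique :: "nat \<Rightarrow> (nat \<Rightarrow> nat \<Rightarrow> bool) \<Rightarrow> nat \<Rightarrow> nat set \<Rightarrow> bool" where
  "is_clique n E t S \<longleftrightarrow> S \<subseteq> {0..<n} \<and> card S = t \<and> (\<forall>u\<in>S. \<forall>v\<in>S. u \<noteq> v \<longrightarrow> E u v)"

definition clique_tensor :: "nat \<Rightarrow> (nat \<Rightarrow> nat \<Rightarrow> bool) \<Rightarrow> nat \<Rightarrow> nat list \<Rightarrow> real" where
  "clique_tensor n E t is =
     (if distinct is \<and> is_clique n E t (set is) then 1 / fact (t - 1) else 0)"

text \<open>(A x^{t-1})_i, summing over all (i_2,...,i_t) in [n]^{t-1}.\<close>
definition tensor_apply :: "nat \<Rightarrow> (nat \<Rightarrow> nat \<Rightarrow> bool) \<Rightarrow> nat \<Rightarrow> (nat \<Rightarrow> complex) \<Rightarrow> nat \<Rightarrow> complex" where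
  "tensor_apply n E t x i =
     (\<Sum>js \<in> {js. length js = t - 1 \<and> set js \<subseteq> {0..<n}}.
        complex_of_real (clique_tensor n E t (i # js)) * (\<Prod>j\<leftarrow>js. x j))"

definition clique_eigenvalue :: "nat \<Rightarrow> (nat \<Rightarrow> nat \<Rightarrow> bool) \<Rightarrow> nat \<Rightarrow> complex \<Rightarrow> bool" where
  "clique_eigenvalue n E t mu \<longleftrightarrow>
     (\<exists>x :: nat \<Rightarrow> complex. (\<exists>i<n. x i \<noteq> 0) \<and>
        (\<forall>i<n. tensor_apply n E t x i = mu * x i ^ (t - 1)))"

definition clique_spectral_radius :: "nat \<Rightarrow> (nat \<Rightarrow> nat \<Rightarrow> bool) \<Rightarrow> nat \<Rightarrow> real" where
  "clique_spectral_radius n E t = Sup (cmod ` {mu. clique_eigenvalue n E t mu})"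

definition ex_mu :: "nat \<Rightarrow> nat \<Rightarrow> 'a set \<Rightarrow> ('a \<Rightarrow> 'a \<Rightarrow> bool) \<Rightarrow> real" where
  "ex_mu r n VH EH = Sup {clique_spectral_radius n E r | E.
      simple_graph {0..<n} E \<and> H_free n E VH EH}"

end

theory Submission
  imports Defs "HOL-Analysis.Analysis" "HOL-Combinatorics.Multiset_Permutations"
begin

text \<open>
  The clique tensor is the gradient of the clique polynomial \<open>P(y) = \<Sum>\<^sub>S \<Prod>\<^sub>i\<^sub>\<in>\<^sub>S y\<^sub>i\<close>
  (sum over \<open>r\<close>-cliques), so \<open>\<mu>\<^sub>r(G) = r \<cdot> max P\<close> on the nonnegative part of the unit sphere of the
  \<open>r\<close>-norm: a maximiser is an eigenvector by the Lagrange conditions, and the moduli of any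
  eigenvector bound the eigenvalue.

  For the lower bound, the balanced complete \<open>r\<close>-partite graph on \<open>r \<lfloor>n/r\<rfloor>\<close> vertices is \<open>H\<close>-free,
  and its uniform vector gives \<open>\<lfloor>n/r\<rfloor>\<^sup>r\<^sup>-\<^sup>1\<close>.

  For the upper bound, an \<open>H\<close>-free graph has \<open>o(n\<^sup>r\<^sup>+\<^sup>1)\<close> cliques of order \<open>r+1\<close>, since by
  Erd\<ouml>s' theorem a positive fraction of them would contain a complete \<open>(r+1)\<close>-partite system with
  parts of size \<open>|V(H)|\<close>, into which \<open>H\<close> embeds along an \<open>(r+1)\<close>-colouring. On the simplex,
  Zykov symmetrization reduces \<open>P\<^sub>r - K P\<^sub>r\<^sub>+\<^sub>1\<close> to a weighting supported on a clique, which gives the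
  supersaturation bound \<open>P\<^sub>r \<le> r\<^sup>-\<^sup>r + \<theta> + K P\<^sub>r\<^sub>+\<^sub>1\<close>. For \<open>y\<close> on the sphere, \<open>P\<^sub>r\<^sub>+\<^sub>1(y)\<close> is split
  into cliques with all weights below \<open>C n\<^sup>-\<^sup>1\<^sup>/\<^sup>r\<close> (few cliques) and the rest (little heavy
  weight), which yields \<open>r P\<^sub>r(y) \<le> (r\<^sup>1\<^sup>-\<^sup>r + o(1)) n\<^sup>r\<^sup>-\<^sup>1\<close>.
\<close>

lemma power_sum_le_card_power_mult_sum_power:
  fixes a :: "'b \<Rightarrow> real"
  assumes "finite I" "\<And>i. i \<in> I \<Longrightarrow> a i \<ge> 0" "t \<ge> 1"
  shows "(\<Sum>i\<in>I. a i) ^ t \<le> real (card I) ^ (t - 1) * (\<Sum>i\<in>I. a i ^ t)"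
proof (cases "I = {}")
  case True
  then show ?thesis using assms by (simp add: power_0_left)
next
  case False
  have c: "real (card I) > 0" using False assms by auto
  have convex: "convex_on {0::real..} (\<lambda>x. x ^ t)"
    using convex_power_even convex_power_odd convex_on_subset by (cases "even t") blast+
  have "(\<Sum>i\<in>I. (1 / card I) *\<^sub>R a i) ^ t \<le> (\<Sum>i\<in>I. (1 / card I) * a i ^ t)"
    by (rule convex_on_sum[OF assms(1) False convex]) (use assms c in auto)
  then have "((\<Sum>i\<in>I. a i) / card I) ^ t \<le> (\<Sum>i\<in>I. a i ^ t) / card I"
    by (simp add: sum_divide_distrib)
  then have "(\<Sum>i\<in>I. a i) ^ t \<le> (\<Sum>i\<in>I. a i ^ t) / card I * real (card I) ^ t"
    using c by (simp add: power_divide divide_le_eq)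
  also have "\<dots> = real (card I) ^ (t - 1) * (\<Sum>i\<in>I. a i ^ t)"
    using c \<open>t \<ge> 1\<close> by (cases t) auto
  finally show ?thesis .
qed

lemma prod_le_mean_power:
  fixes x :: "'b \<Rightarrow> real"
  assumes "finite S" "card S = k" "k > 0" "\<And>i. i \<in> S \<Longrightarrow> x i \<ge> 0"
  shows "(\<Prod>i\<in>S. x i) \<le> ((\<Sum>i\<in>S. x i) / k) ^ k"
proof -
  have p0: "(\<Prod>i\<in>S. x i) \<ge> 0" using assms by (simp add: prod_nonneg)
  have "S \<noteq> {}" using assms by auto
  then have "(\<Prod>i\<in>S. x i) powr (1 / k) \<le> (\<Sum>i\<in>S. x i / k)"
    using arith_geom_mean[OF assms(1), of x] assms by auto
  then have "((\<Prod>i\<in>S. x i) powr (1 / k)) ^ k \<le> (\<Sum>i\<in>S. x i / k) ^ k"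
    by (intro power_mono) auto
  moreover have "((\<Prod>i\<in>S. x i) powr (1 / k)) ^ k = (\<Prod>i\<in>S. x i)"
  proof (cases "(\<Prod>i\<in>S. x i) = 0")
    case False
    then have "(\<Prod>i\<in>S. x i) powr (1 / k) > 0" using p0 by simp
    then have "((\<Prod>i\<in>S. x i) powr (1 / k)) ^ k = ((\<Prod>i\<in>S. x i) powr (1 / k)) powr k"
      by (simp add: powr_realpow)
    also have "\<dots> = (\<Prod>i\<in>S. x i)" using \<open>k > 0\<close> False p0 by (simp add: powr_powr)
    finally show ?thesis .
  qed (use \<open>k > 0\<close> in simp)
  ultimately show ?thesis by (simp add: sum_divide_distrib)
qed

section \<open>Elementary symmetric polynomials\<close>

definition ksubsets :: "'b set \<Rightarrow> nat \<Rightarrow> 'b set set" where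
  "ksubsets W k = {S. S \<subseteq> W \<and> card S = k}"

definition elem_sym :: "'b set \<Rightarrow> nat \<Rightarrow> ('b \<Rightarrow> real) \<Rightarrow> real" where
  "elem_sym W k w = (\<Sum>S\<in>ksubsets W k. \<Prod>i\<in>S. w i)"

lemma finite_ksubsets [simp]: "finite W \<Longrightarrow> finite (ksubsets W k)"
  unfolding ksubsets_def by (rule finite_subset[of _ "Pow W"]) auto

lemma card_ksubsets: "finite W \<Longrightarrow> card (ksubsets W k) = card W choose k"
  unfolding ksubsets_def by (rule n_subsets)

lemma ksubsets_0: "finite W \<Longrightarrow> ksubsets W 0 = {{}}"
  unfolding ksubsets_def by (auto intro: finite_subset simp: card_eq_0_iff)

lemma sum_pointed_ksubsets:
  fixes f :: "'b \<Rightarrow> 'b set \<Rightarrow> 'c::comm_monoid_add"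
  assumes W: "finite W"
  shows "(\<Sum>S\<in>ksubsets W (Suc k). \<Sum>v\<in>S. f v (S - {v})) = (\<Sum>v\<in>W. \<Sum>T\<in>ksubsets (W - {v}) k. f v T)"
proof -
  have fin: "finite S" if "S \<in> ksubsets W k'" for S k'
    using that W unfolding ksubsets_def by (auto intro: finite_subset)
  have "(\<Sum>S\<in>ksubsets W (Suc k). \<Sum>v\<in>S. f v (S - {v}))
      = (\<Sum>(S, v)\<in>Sigma (ksubsets W (Suc k)) (\<lambda>S. S). f v (S - {v}))"
    by (rule sum.Sigma) (use W fin in auto)
  also have "\<dots> = (\<Sum>(v, T)\<in>Sigma W (\<lambda>v. ksubsets (W - {v}) k). f v T)"
  proof (rule sum.reindex_bij_witness[of _ "\<lambda>(v, T). (insert v T, v)" "\<lambda>(S, v). (v, S - {v})"])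
    fix a assume a: "a \<in> Sigma W (\<lambda>v. ksubsets (W - {v}) k)"
    obtain v T where [simp]: "a = (v, T)" by (cases a)
    have "finite T" using a W by (auto simp: ksubsets_def intro: finite_subset)
    then show "(case a of (v, T) \<Rightarrow> (insert v T, v)) \<in> Sigma (ksubsets W (Suc k)) (\<lambda>S. S)"
      using a by (auto simp: ksubsets_def card_insert_if)
  next
    fix a assume "a \<in> Sigma (ksubsets W (Suc k)) (\<lambda>S. S)"
    moreover obtain S v where "a = (S, v)" by (cases a)
    ultimately show "(case a of (S, v) \<Rightarrow> (v, S - {v})) \<in> Sigma W (\<lambda>v. ksubsets (W - {v}) k)"
      using fin[of S "Suc k"] by (auto simp: ksubsets_def)
  qed (auto simp: ksubsets_def)
  also have "\<dots> = (\<Sum>v\<in>W. \<Sum>T\<in>ksubsets (W - {v}) k. f v T)"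
    by (rule sum.Sigma[symmetric]) (use W in auto)
  finally show ?thesis .
qed

lemma elem_sym_nonneg: "(\<And>i. i \<in> W \<Longrightarrow> w i \<ge> 0) \<Longrightarrow> elem_sym W k w \<ge> 0"
  unfolding elem_sym_def ksubsets_def by (intro sum_nonneg prod_nonneg) auto

lemma elem_sym_mono:
  assumes "finite W" "V \<subseteq> W" "\<And>i. i \<in> W \<Longrightarrow> w i \<ge> 0"
  shows "elem_sym V k w \<le> elem_sym W k w"
  unfolding elem_sym_def
  by (rule sum_mono2) (use assms in \<open>auto simp: ksubsets_def intro!: prod_nonneg\<close>)

lemma elem_sym_Suc:
  assumes W: "finite W"
  shows "real (Suc k) * elem_sym W (Suc k) w = (\<Sum>v\<in>W. w v * elem_sym (W - {v}) k w)"
proof -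
  have "real (Suc k) * elem_sym W (Suc k) w
      = (\<Sum>S\<in>ksubsets W (Suc k). \<Sum>v\<in>S. w v * (\<Prod>i\<in>S - {v}. w i))"
    unfolding elem_sym_def sum_distrib_left
  proof (rule sum.cong[OF refl])
    fix S assume "S \<in> ksubsets W (Suc k)"
    then have "finite S" "card S = Suc k" using W unfolding ksubsets_def by (auto intro: finite_subset)
    then show "real (Suc k) * (\<Prod>i\<in>S. w i) = (\<Sum>v\<in>S. w v * (\<Prod>i\<in>S - {v}. w i))"
      by (simp add: prod.remove[symmetric])
  qed
  also have "\<dots> = (\<Sum>v\<in>W. \<Sum>T\<in>ksubsets (W - {v}) k. w v * (\<Prod>i\<in>T. w i))"
    by (rule sum_pointed_ksubsets[OF W])
  also have "\<dots> = (\<Sum>v\<in>W. w v * elem_sym (W - {v}) k w)"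
    unfolding elem_sym_def by (simp add: sum_distrib_left)
  finally show ?thesis .
qed

lemma elem_sym_le_power_sum:
  assumes "finite W" "\<And>i. i \<in> W \<Longrightarrow> w i \<ge> 0"
  shows "elem_sym W k w \<le> (\<Sum>i\<in>W. w i) ^ k"
proof (induction k)
  case 0
  then show ?case using assms(1) by (simp add: elem_sym_def ksubsets_0)
next
  case (Suc k)
  have "real (Suc k) * elem_sym W (Suc k) w = (\<Sum>v\<in>W. w v * elem_sym (W - {v}) k w)"
    by (rule elem_sym_Suc[OF assms(1)])
  also have "\<dots> \<le> (\<Sum>v\<in>W. w v * (\<Sum>i\<in>W. w i) ^ k)"
  proof (rule sum_mono)
    fix v assume v: "v \<in> W"
    have "elem_sym (W - {v}) k w \<le> elem_sym W k w"
      by (rule elem_sym_mono) (use assms in auto)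
    also have "\<dots> \<le> (\<Sum>i\<in>W. w i) ^ k" by (rule Suc.IH)
    finally have "elem_sym (W - {v}) k w \<le> (\<Sum>i\<in>W. w i) ^ k" .
    then show "w v * elem_sym (W - {v}) k w \<le> w v * (\<Sum>i\<in>W. w i) ^ k"
      using assms(2)[OF v] by (simp add: mult_left_mono)
  qed
  also have "\<dots> = (\<Sum>i\<in>W. w i) ^ Suc k" by (simp add: sum_distrib_right[symmetric])
  finally have "real (Suc k) * elem_sym W (Suc k) w \<le> (\<Sum>i\<in>W. w i) ^ Suc k" .
  moreover have "elem_sym W (Suc k) w \<ge> 0" by (rule elem_sym_nonneg) (use assms in auto)
  ultimately show ?case
    by (smt (verit) mult_le_cancel_right1 of_nat_0_le_iff of_nat_Suc)
qed

lemma sum_ksubsets_prod_mult_complement: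
  assumes W: "finite W"
  shows "(\<Sum>S\<in>ksubsets W k. (\<Prod>i\<in>S. w i) * (\<Sum>v\<in>W - S. w v)) = real (Suc k) * elem_sym W (Suc k) w"
proof -
  have "(\<Sum>S\<in>ksubsets W k. (\<Prod>i\<in>S. w i) * (\<Sum>v\<in>W - S. w v))
      = (\<Sum>S\<in>ksubsets W k. \<Sum>v\<in>W. if v \<in> S then 0 else w v * (\<Prod>i\<in>S. w i))"
  proof (rule sum.cong[OF refl])
    fix S assume "S \<in> ksubsets W k"
    have "(\<Sum>v\<in>W. if v \<in> S then 0 else w v * (\<Prod>i\<in>S. w i)) = (\<Sum>v\<in>W - S. w v * (\<Prod>i\<in>S. w i))"
      using W by (simp add: sum.If_cases Diff_eq)
    then show "(\<Prod>i\<in>S. w i) * (\<Sum>v\<in>W - S. w v) = (\<Sum>v\<in>W. if v \<in> S then 0 else w v * (\<Prod>i\<in>S. w i))"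
      by (simp add: sum_distrib_left mult.commute)
  qed
  also have "\<dots> = (\<Sum>v\<in>W. \<Sum>S\<in>ksubsets W k. if v \<in> S then 0 else w v * (\<Prod>i\<in>S. w i))"
    by (rule sum.swap)
  also have "\<dots> = (\<Sum>v\<in>W. w v * elem_sym (W - {v}) k w)"
  proof (rule sum.cong[OF refl])
    fix v
    have "ksubsets (W - {v}) k = {S \<in> ksubsets W k. v \<notin> S}" unfolding ksubsets_def by auto
    then show "(\<Sum>S\<in>ksubsets W k. if v \<in> S then 0 else w v * (\<Prod>i\<in>S. w i)) = w v * elem_sym (W - {v}) k w"
      unfolding elem_sym_def using W by (simp add: sum.If_cases sum_distrib_left Int_def)
  qed
  also have "\<dots> = real (Suc k) * elem_sym W (Suc k) w" by (rule elem_sym_Suc[OF W, symmetric])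
  finally show ?thesis .
qed

text \<open>Every other \<open>(k+1)\<close>-set leaves \<open>S0\<close> somewhere, so it is charged to the weight outside \<open>S0\<close>.\<close>
lemma sum_other_ksubsets_le_outer_weight:
  fixes w :: "'b \<Rightarrow> real"
  assumes W: "finite W" and w0: "\<And>i. i \<in> W \<Longrightarrow> w i \<ge> 0" and w1: "(\<Sum>i\<in>W. w i) = 1"
    and S0: "S0 \<in> ksubsets W (Suc k)"
  shows "(\<Sum>S\<in>ksubsets W (Suc k) - {S0}. \<Prod>i\<in>S. w i) \<le> 1 - (\<Sum>i\<in>S0. w i)"
proof -
  have S0W: "S0 \<subseteq> W" and cS0: "card S0 = Suc k" using S0 unfolding ksubsets_def by auto
  have fS0: "finite S0" using S0W W by (auto intro: finite_subset)
  define g where "g v = (if v \<in> S0 then 0 else w v)" for v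
  have g0: "g v \<ge> 0" if "v \<in> W" for v using w0 that by (simp add: g_def)
  have "(\<Sum>S\<in>ksubsets W (Suc k) - {S0}. \<Prod>i\<in>S. w i)
      \<le> (\<Sum>S\<in>ksubsets W (Suc k) - {S0}. \<Sum>v\<in>S. g v * (\<Prod>i\<in>S - {v}. w i))"
  proof (rule sum_mono)
    fix S assume S: "S \<in> ksubsets W (Suc k) - {S0}"
    then have SW: "S \<subseteq> W" and fS: "finite S" using W unfolding ksubsets_def by (auto intro: finite_subset)
    have "\<not> S \<subseteq> S0" using card_subset_eq[OF fS0] cS0 S unfolding ksubsets_def by auto
    then obtain v where v: "v \<in> S" "v \<notin> S0" by auto
    have "(\<Prod>i\<in>S. w i) = g v * (\<Prod>i\<in>S - {v}. w i)"
      using v fS by (simp add: g_def prod.remove)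
    also have "\<dots> \<le> (\<Sum>v\<in>S. g v * (\<Prod>i\<in>S - {v}. w i))"
      by (rule member_le_sum) (use v fS SW w0 g0 in \<open>auto intro!: mult_nonneg_nonneg prod_nonneg\<close>)
    finally show "(\<Prod>i\<in>S. w i) \<le> (\<Sum>v\<in>S. g v * (\<Prod>i\<in>S - {v}. w i))" .
  qed
  also have "\<dots> \<le> (\<Sum>S\<in>ksubsets W (Suc k). \<Sum>v\<in>S. g v * (\<Prod>i\<in>S - {v}. w i))"
    by (rule sum_mono2)
      (use W w0 g0 in \<open>auto simp: ksubsets_def intro!: sum_nonneg mult_nonneg_nonneg prod_nonneg\<close>)
  also have "\<dots> = (\<Sum>v\<in>W. \<Sum>T\<in>ksubsets (W - {v}) k. g v * (\<Prod>i\<in>T. w i))"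
    by (rule sum_pointed_ksubsets[OF W])
  also have "\<dots> = (\<Sum>v\<in>W. g v * elem_sym (W - {v}) k w)"
    unfolding elem_sym_def by (simp add: sum_distrib_left)
  also have "\<dots> \<le> (\<Sum>v\<in>W. g v)"
  proof (rule sum_mono)
    fix v assume v: "v \<in> W"
    have "elem_sym (W - {v}) k w \<le> (\<Sum>i\<in>W - {v}. w i) ^ k"
      by (rule elem_sym_le_power_sum) (use W w0 in auto)
    also have "\<dots> \<le> 1"
      using w1 sum_mono2[OF W, of "W - {v}" w] w0 by (intro power_le_one sum_nonneg) auto
    finally show "g v * elem_sym (W - {v}) k w \<le> g v"
      using g0[OF v] by (simp add: mult_left_le)
  qed
  also have "\<dots> = 1 - (\<Sum>i\<in>S0. w i)"
    using W S0W w1 by (simp add: g_def sum.If_cases Diff_eq[symmetric] sum_diff)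
  finally show ?thesis .
qed

lemma elem_sym_le_heavy_ksubset:
  fixes w :: "'b \<Rightarrow> real"
  assumes W: "finite W" and w0: "\<And>i. i \<in> W \<Longrightarrow> w i \<ge> 0" and w1: "(\<Sum>i\<in>W. w i) = 1"
    and S0: "S0 \<in> ksubsets W (Suc k)"
  shows "elem_sym W (Suc k) w \<le> 1 / real (Suc k) ^ Suc k + (1 - (\<Sum>i\<in>S0. w i))"
proof -
  have S0W: "S0 \<subseteq> W" and cS0: "card S0 = Suc k" using S0 unfolding ksubsets_def by auto
  have fS0: "finite S0" using S0W W by (auto intro: finite_subset)
  have "(\<Prod>i\<in>S0. w i) \<le> ((\<Sum>i\<in>S0. w i) / Suc k) ^ Suc k"
    by (rule prod_le_mean_power[OF fS0 cS0]) (use w0 S0W in auto)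
  also have "\<dots> \<le> (1 / Suc k) ^ Suc k"
  proof (intro power_mono divide_right_mono)
    show "(\<Sum>i\<in>S0. w i) \<le> 1" using w1 sum_mono2[OF W S0W, of w] w0 by auto
    show "0 \<le> (\<Sum>i\<in>S0. w i) / real (Suc k)" using w0 S0W by (intro divide_nonneg_nonneg sum_nonneg) auto
  qed auto
  finally have "(\<Prod>i\<in>S0. w i) \<le> 1 / real (Suc k) ^ Suc k" by (simp add: power_divide)
  moreover have "elem_sym W (Suc k) w = (\<Prod>i\<in>S0. w i) + (\<Sum>S\<in>ksubsets W (Suc k) - {S0}. \<Prod>i\<in>S. w i)"
    unfolding elem_sym_def using S0 W by (simp add: sum.remove)
  ultimately show ?thesis using sum_other_ksubsets_le_outer_weight[OF W w0 w1 S0] by linarith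
qed

lemma elem_sym_le_spread:
  fixes w :: "'b \<Rightarrow> real"
  assumes W: "finite W" and w0: "\<And>i. i \<in> W \<Longrightarrow> w i \<ge> 0" and w1: "(\<Sum>i\<in>W. w i) = 1"
    and \<theta>: "\<theta> > 0" and light: "\<And>S. S \<in> ksubsets W (Suc k) \<Longrightarrow> (\<Sum>i\<in>S. w i) \<le> 1 - \<theta>"
  shows "elem_sym W (Suc k) w \<le> real (Suc (Suc k)) / \<theta> * elem_sym W (Suc (Suc k)) w"
proof -
  have "elem_sym W (Suc k) w \<le> (\<Sum>S\<in>ksubsets W (Suc k). (\<Prod>i\<in>S. w i) * (\<Sum>v\<in>W - S. w v)) / \<theta>"
    unfolding elem_sym_def sum_divide_distrib
  proof (rule sum_mono)
    fix S assume S: "S \<in> ksubsets W (Suc k)"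
    then have SW: "S \<subseteq> W" unfolding ksubsets_def by auto
    have "\<theta> \<le> (\<Sum>v\<in>W - S. w v)" using light[OF S] W SW w1 by (simp add: sum_diff)
    moreover have "(\<Prod>i\<in>S. w i) \<ge> 0" using w0 SW by (auto intro: prod_nonneg)
    ultimately have "(\<Prod>i\<in>S. w i) * \<theta> \<le> (\<Prod>i\<in>S. w i) * (\<Sum>v\<in>W - S. w v)"
      by (simp add: mult_left_mono)
    then show "(\<Prod>i\<in>S. w i) \<le> (\<Prod>i\<in>S. w i) * (\<Sum>v\<in>W - S. w v) / \<theta>"
      using \<theta> by (simp add: le_divide_eq)
  qed
  also have "\<dots> = real (Suc (Suc k)) / \<theta> * elem_sym W (Suc (Suc k)) w"
    using sum_ksubsets_prod_mult_complement[OF W, of w "Suc k"] by simp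
  finally show ?thesis .
qed

lemma elem_sym_supersaturation:
  fixes w :: "'b \<Rightarrow> real"
  assumes W: "finite W" and w0: "\<And>i. i \<in> W \<Longrightarrow> w i \<ge> 0" and w1: "(\<Sum>i\<in>W. w i) = 1"
    and \<theta>: "\<theta> > 0"
  shows "elem_sym W (Suc k) w
    \<le> 1 / real (Suc k) ^ Suc k + \<theta> + real (Suc (Suc k)) / \<theta> * elem_sym W (Suc (Suc k)) w"
proof (cases "\<exists>S0\<in>ksubsets W (Suc k). (\<Sum>i\<in>S0. w i) > 1 - \<theta>")
  case True
  then obtain S0 where "S0 \<in> ksubsets W (Suc k)" "(\<Sum>i\<in>S0. w i) > 1 - \<theta>" by blast
  moreover have "real (Suc (Suc k)) / \<theta> * elem_sym W (Suc (Suc k)) w \<ge> 0"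
    using \<theta> elem_sym_nonneg[of W w] w0 by simp
  ultimately show ?thesis using elem_sym_le_heavy_ksubset[OF W w0 w1] by fastforce
next
  case False
  then have "elem_sym W (Suc k) w \<le> real (Suc (Suc k)) / \<theta> * elem_sym W (Suc (Suc k)) w"
    by (intro elem_sym_le_spread[OF W w0 w1 \<theta>]) (auto simp: not_less)
  moreover have "1 / real (Suc k) ^ Suc k \<ge> 0" by simp
  ultimately show ?thesis using \<theta> by linarith
qed

section \<open>Zykov symmetrization\<close>

definition set_poly :: "'b set set \<Rightarrow> ('b set \<Rightarrow> real) \<Rightarrow> ('b \<Rightarrow> real) \<Rightarrow> real" where
  "set_poly \<S> c y = (\<Sum>S\<in>\<S>. c S * (\<Prod>i\<in>S. y i))"

lemma set_poly_affine_in_separated_pair: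
  assumes fin: "finite \<S>" "\<And>S. S \<in> \<S> \<Longrightarrow> finite S"
    and sep: "\<And>S. S \<in> \<S> \<Longrightarrow> \<not> (u \<in> S \<and> v \<in> S)"
  shows "\<exists>A B C. \<forall>y. (\<forall>i. i \<noteq> u \<longrightarrow> i \<noteq> v \<longrightarrow> y i = z i) \<longrightarrow>
           set_poly \<S> c y = A + y u * B + y v * C"
proof (intro exI allI impI)
  fix y assume agree: "\<forall>i. i \<noteq> u \<longrightarrow> i \<noteq> v \<longrightarrow> y i = z i"
  have "c S * (\<Prod>i\<in>S. y i) = (if u \<in> S then y u * (c S * (\<Prod>i\<in>S - {u}. z i))
      else if v \<in> S then y v * (c S * (\<Prod>i\<in>S - {v}. z i)) else c S * (\<Prod>i\<in>S. z i))"
    if S: "S \<in> \<S>" for S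
  proof -
    have "u \<in> S \<Longrightarrow> (\<Prod>i\<in>S - {u}. y i) = (\<Prod>i\<in>S - {u}. z i)"
      "v \<in> S \<Longrightarrow> (\<Prod>i\<in>S - {v}. y i) = (\<Prod>i\<in>S - {v}. z i)"
      "u \<notin> S \<Longrightarrow> v \<notin> S \<Longrightarrow> (\<Prod>i\<in>S. y i) = (\<Prod>i\<in>S. z i)"
      using sep[OF S] agree by (auto intro!: prod.cong)
    then show ?thesis using fin(2)[OF S] by (auto simp: prod.remove)
  qed
  then show "set_poly \<S> c y
    = (\<Sum>S\<in>\<S> \<inter> - {S. u \<in> S} \<inter> - {S. v \<in> S}. c S * (\<Prod>i\<in>S. z i))
      + y u * (\<Sum>S\<in>\<S> \<inter> {S. u \<in> S}. c S * (\<Prod>i\<in>S - {u}. z i))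
      + y v * (\<Sum>S\<in>\<S> \<inter> - {S. u \<in> S} \<inter> {S. v \<in> S}. c S * (\<Prod>i\<in>S - {v}. z i))"
    unfolding set_poly_def using fin(1)
    by (simp add: sum.If_cases sum_distrib_left Int_assoc cong: sum.cong)
qed

text \<open>Along \<open>e\<^sub>u - e\<^sub>v\<close> the polynomial is affine, so one of the two endpoints is no worse.\<close>
lemma set_poly_merge_separated_pair:
  assumes fin: "finite \<S>" "\<And>S. S \<in> \<S> \<Longrightarrow> finite S"
    and sep: "\<And>S. S \<in> \<S> \<Longrightarrow> \<not> (u \<in> S \<and> v \<in> S)"
    and uv: "u \<noteq> v" and z0: "z u \<ge> 0" "z v \<ge> 0"
  shows "set_poly \<S> c z \<le> set_poly \<S> c (z(u := z u + z v, v := 0))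
       \<or> set_poly \<S> c z \<le> set_poly \<S> c (z(v := z v + z u, u := 0))"
proof -
  obtain A B C where F: "\<And>y. \<forall>i. i \<noteq> u \<longrightarrow> i \<noteq> v \<longrightarrow> y i = z i \<Longrightarrow>
      set_poly \<S> c y = A + y u * B + y v * C"
    using set_poly_affine_in_separated_pair[OF fin sep] by blast
  have "set_poly \<S> c z = A + z u * B + z v * C" by (rule F) simp
  moreover have "set_poly \<S> c (z(u := z u + z v, v := 0)) = A + (z u + z v) * B"
    using F[of "z(u := z u + z v, v := 0)"] uv by simp
  moreover have "set_poly \<S> c (z(v := z v + z u, u := 0)) = A + (z v + z u) * C"
    using F[of "z(v := z v + z u, u := 0)"] uv by simp
  moreover have "z v * C \<le> z v * B \<or> z u * B \<le> z u * C"
    using z0 by (cases "C \<le> B") (auto intro: mult_left_mono)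
  ultimately show ?thesis by (auto simp: algebra_simps)
qed

lemma merge_weight_sum:
  fixes z :: "'b \<Rightarrow> 'c::comm_monoid_add"
  assumes "finite V" "u \<in> V" "v \<in> V" "u \<noteq> v"
  shows "(\<Sum>i\<in>V. (z(u := z u + z v, v := 0)) i) = (\<Sum>i\<in>V. z i)"
proof -
  have "(\<Sum>i\<in>V. y i) = y u + y v + (\<Sum>i\<in>V - {u} - {v}. y i)" for y :: "'b \<Rightarrow> 'c"
    using assms by (simp add: sum.remove[of V u] sum.remove[of "V - {u}" v] add.assoc)
  moreover have "(\<Sum>i\<in>V - {u} - {v}. (z(u := z u + z v, v := 0)) i) = (\<Sum>i\<in>V - {u} - {v}. z i)"
    by (rule sum.cong) auto
  ultimately show ?thesis using assms(4) by simp
qed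

lemma merge_weight_support:
  assumes "finite V" "v \<in> V" "z u \<noteq> 0" "z v \<noteq> 0"
  shows "card {i\<in>V. (z(u := z u + z v, v := 0)) i \<noteq> 0} < card {i\<in>V. z i \<noteq> 0}"
  by (rule psubset_card_mono) (use assms in auto)

lemma zykov_symmetrization:
  fixes z :: "'b \<Rightarrow> real"
  assumes V: "finite V" and SV: "\<And>S. S \<in> \<S> \<Longrightarrow> S \<subseteq> V"
    and cl: "\<And>S u v. S \<in> \<S> \<Longrightarrow> u \<in> S \<Longrightarrow> v \<in> S \<Longrightarrow> u \<noteq> v \<Longrightarrow> E u v"
    and z0: "\<And>i. i \<in> V \<Longrightarrow> z i \<ge> 0"
  shows "\<exists>z'. (\<forall>i\<in>V. z' i \<ge> 0) \<and> (\<Sum>i\<in>V. z' i) = (\<Sum>i\<in>V. z i) \<and> set_poly \<S> c z \<le> set_poly \<S> c z'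
     \<and> (\<forall>u\<in>V. \<forall>v\<in>V. u \<noteq> v \<and> z' u \<noteq> 0 \<and> z' v \<noteq> 0 \<longrightarrow> E u v)"
  using z0
proof (induction "card {i\<in>V. z i \<noteq> 0}" arbitrary: z rule: less_induct)
  case less
  have fin: "finite \<S>" "\<And>S. S \<in> \<S> \<Longrightarrow> finite S"
    using V SV by (auto intro: finite_subset[of _ "Pow V"] finite_subset)
  show ?case
  proof (cases "\<forall>u\<in>V. \<forall>v\<in>V. u \<noteq> v \<and> z u \<noteq> 0 \<and> z v \<noteq> 0 \<longrightarrow> E u v")
    case True
    then show ?thesis using less.prems by blast
  next
    case False
    then obtain u v where uv: "u \<in> V" "v \<in> V" "u \<noteq> v" "z u \<noteq> 0" "z v \<noteq> 0" "\<not> E u v" by blast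
    have sep: "\<And>S. S \<in> \<S> \<Longrightarrow> \<not> (u \<in> S \<and> v \<in> S)" using cl uv by blast
    have step: "\<exists>z'. (\<forall>i\<in>V. z' i \<ge> 0) \<and> (\<Sum>i\<in>V. z' i) = (\<Sum>i\<in>V. z i)
        \<and> set_poly \<S> c z \<le> set_poly \<S> c z' \<and> (\<forall>u\<in>V. \<forall>v\<in>V. u \<noteq> v \<and> z' u \<noteq> 0 \<and> z' v \<noteq> 0 \<longrightarrow> E u v)"
      if ab: "a \<in> V" "b \<in> V" "a \<noteq> b" "z a \<noteq> 0" "z b \<noteq> 0"
        and improves: "set_poly \<S> c z \<le> set_poly \<S> c (z(a := z a + z b, b := 0))" for a b
    proof -
      let ?z = "z(a := z a + z b, b := 0)"
      have "\<forall>i\<in>V. ?z i \<ge> 0" using less.prems ab by auto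
      then obtain z' where "(\<forall>i\<in>V. z' i \<ge> 0) \<and> (\<Sum>i\<in>V. z' i) = (\<Sum>i\<in>V. ?z i)
          \<and> set_poly \<S> c ?z \<le> set_poly \<S> c z' \<and> (\<forall>u\<in>V. \<forall>v\<in>V. u \<noteq> v \<and> z' u \<noteq> 0 \<and> z' v \<noteq> 0 \<longrightarrow> E u v)"
        using less.hyps[OF merge_weight_support[OF V ab(2,4,5)]] by blast
      then show ?thesis using merge_weight_sum[OF V ab(1-3), of z] improves by auto
    qed
    show ?thesis
      using set_poly_merge_separated_pair[OF fin sep uv(3), of z c] less.prems uv
        step[of u v] step[of v u] by auto
  qed
qed

section \<open>The clique polynomial and supersaturation\<close>

definition cliques :: "nat \<Rightarrow> (nat \<Rightarrow> nat \<Rightarrow> bool) \<Rightarrow> nat \<Rightarrow> nat set set" where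
  "cliques n E k = {S. is_clique n E k S}"

definition clique_poly :: "nat \<Rightarrow> (nat \<Rightarrow> nat \<Rightarrow> bool) \<Rightarrow> nat \<Rightarrow> (nat \<Rightarrow> real) \<Rightarrow> real" where
  "clique_poly n E k y = (\<Sum>S\<in>cliques n E k. \<Prod>i\<in>S. y i)"

lemma cliques_subset_ksubsets: "cliques n E k \<subseteq> ksubsets {0..<n} k"
  unfolding cliques_def is_clique_def ksubsets_def by auto

lemma finite_cliques [simp]: "finite (cliques n E k)"
  using cliques_subset_ksubsets by (rule finite_subset) simp

lemma card_clique: "S \<in> cliques n E k \<Longrightarrow> card S = k"
  unfolding cliques_def is_clique_def by auto

lemma finite_clique: "S \<in> cliques n E k \<Longrightarrow> finite S"
  unfolding cliques_def is_clique_def using finite_subset by blast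

lemma clique_poly_nonneg: "(\<And>j. y j \<ge> 0) \<Longrightarrow> clique_poly n E k y \<ge> 0"
  unfolding clique_poly_def by (intro sum_nonneg prod_nonneg) auto

lemma clique_poly_scale: "clique_poly n E k (\<lambda>i. a * y i) = a ^ k * clique_poly n E k y"
  unfolding clique_poly_def sum_distrib_left
  by (rule sum.cong[OF refl]) (simp add: prod.distrib card_clique)

lemma clique_poly_le_power_sum:
  assumes "\<And>i. y i \<ge> 0"
  shows "clique_poly n E k y \<le> (\<Sum>i<n. y i) ^ k"
proof -
  have "clique_poly n E k y \<le> elem_sym {0..<n} k y"
    unfolding clique_poly_def elem_sym_def
    by (rule sum_mono2) (use cliques_subset_ksubsets assms in \<open>auto intro!: prod_nonneg\<close>)
  also have "\<dots> \<le> (\<Sum>i<n. y i) ^ k"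
    using elem_sym_le_power_sum[of "{0..<n}" y k] assms by (simp add: atLeast0LessThan)
  finally show ?thesis .
qed

lemma clique_poly_eq_elem_sym:
  assumes W: "W \<subseteq> {0..<n}" and Wcl: "\<And>u v. u \<in> W \<Longrightarrow> v \<in> W \<Longrightarrow> u \<noteq> v \<Longrightarrow> E u v"
    and y0: "\<And>i. i < n \<Longrightarrow> i \<notin> W \<Longrightarrow> y i = 0"
  shows "clique_poly n E k y = elem_sym W k y"
proof -
  have sub: "ksubsets W k \<subseteq> cliques n E k"
    unfolding ksubsets_def cliques_def is_clique_def using W Wcl by auto
  have "(\<Prod>i\<in>S. y i) = 0" if "S \<in> cliques n E k - ksubsets W k" for S
  proof -
    have "\<not> S \<subseteq> W" "S \<subseteq> {0..<n}"
      using that unfolding ksubsets_def cliques_def is_clique_def by auto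
    then obtain i where "i \<in> S" "i \<notin> W" "i < n" by (meson atLeastLessThan_iff subsetD subsetI)
    then show ?thesis using y0 finite_clique[of S n E k] that by (auto intro: prod_zero)
  qed
  then show ?thesis
    unfolding clique_poly_def elem_sym_def by (intro sum.mono_neutral_right[OF finite_cliques sub]) auto
qed

lemma clique_poly_supersaturation_simplex:
  fixes z :: "nat \<Rightarrow> real"
  assumes z0: "\<And>i. i < n \<Longrightarrow> z i \<ge> 0" and z1: "(\<Sum>i<n. z i) = 1" and \<theta>: "\<theta> > 0"
  shows "clique_poly n E (Suc k) z
    \<le> 1 / real (Suc k) ^ Suc k + \<theta> + real (Suc (Suc k)) / \<theta> * clique_poly n E (Suc (Suc k)) z"
proof -
  define K where "K = real (Suc (Suc k)) / \<theta>"
  define \<S> where "\<S> = cliques n E (Suc k) \<union> cliques n E (Suc (Suc k))"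
  define c where "c S = (if card S = Suc k then 1 else - K)" for S :: "nat set"
  have F: "set_poly \<S> c y = clique_poly n E (Suc k) y - K * clique_poly n E (Suc (Suc k)) y" for y
  proof -
    have "cliques n E (Suc k) \<inter> cliques n E (Suc (Suc k)) = {}"
      using card_clique[of _ n E] by (metis disjoint_iff n_not_Suc_n)
    then have "set_poly \<S> c y = (\<Sum>S\<in>cliques n E (Suc k). c S * (\<Prod>i\<in>S. y i))
        + (\<Sum>S\<in>cliques n E (Suc (Suc k)). c S * (\<Prod>i\<in>S. y i))"
      unfolding set_poly_def \<S>_def by (intro sum.union_disjoint) auto
    then show ?thesis
      unfolding clique_poly_def sum_distrib_left by (simp add: c_def card_clique sum_negf)
  qed
  have "\<And>S. S \<in> \<S> \<Longrightarrow> S \<subseteq> {0..<n}"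
    and "\<And>S u v. S \<in> \<S> \<Longrightarrow> u \<in> S \<Longrightarrow> v \<in> S \<Longrightarrow> u \<noteq> v \<Longrightarrow> E u v"
    unfolding \<S>_def cliques_def is_clique_def by auto
  then obtain z' where z': "\<forall>i\<in>{0..<n}. z' i \<ge> 0" "(\<Sum>i\<in>{0..<n}. z' i) = (\<Sum>i\<in>{0..<n}. z i)"
    "set_poly \<S> c z \<le> set_poly \<S> c z'"
    "\<forall>u\<in>{0..<n}. \<forall>v\<in>{0..<n}. u \<noteq> v \<and> z' u \<noteq> 0 \<and> z' v \<noteq> 0 \<longrightarrow> E u v"
    using zykov_symmetrization[of "{0..<n}" \<S> E z c] z0 by auto
  define W where "W = {i\<in>{0..<n}. z' i \<noteq> 0}"
  have W: "W \<subseteq> {0..<n}" "finite W" and z'0: "\<And>i. i < n \<Longrightarrow> i \<notin> W \<Longrightarrow> z' i = 0"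
    unfolding W_def by auto
  have Wcl: "\<And>u v. u \<in> W \<Longrightarrow> v \<in> W \<Longrightarrow> u \<noteq> v \<Longrightarrow> E u v" using z'(4) unfolding W_def by auto
  have "(\<Sum>i\<in>W. z' i) = (\<Sum>i\<in>{0..<n}. z' i)"
    by (rule sum.mono_neutral_left) (use W z'0 in auto)
  then have sW: "(\<Sum>i\<in>W. z' i) = 1" using z'(2) z1 by (simp add: atLeast0LessThan)
  have "clique_poly n E (Suc k) z - K * clique_poly n E (Suc (Suc k)) z
      \<le> elem_sym W (Suc k) z' - K * elem_sym W (Suc (Suc k)) z'"
    using z'(3) F clique_poly_eq_elem_sym[OF W(1) Wcl z'0] by simp
  also have "\<dots> \<le> 1 / real (Suc k) ^ Suc k + \<theta>"
    using elem_sym_supersaturation[OF W(2) _ sW \<theta>, of k] z'(1) W(1) unfolding K_def by force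
  finally show ?thesis unfolding K_def by simp
qed

lemma clique_poly_supersaturation:
  fixes y :: "nat \<Rightarrow> real"
  assumes y0: "\<And>i. y i \<ge> 0" and s: "(\<Sum>i<n. y i) > 0" and \<theta>: "\<theta> > 0"
  shows "clique_poly n E (Suc k) y \<le> (1 / real (Suc k) ^ Suc k + \<theta>) * (\<Sum>i<n. y i) ^ Suc k
     + real (Suc (Suc k)) / \<theta> * clique_poly n E (Suc (Suc k)) y / (\<Sum>i<n. y i)"
proof -
  define s where "s = (\<Sum>i<n. y i)"
  define a where "a = 1 / real (Suc k) ^ Suc k + \<theta>"
  define K where "K = real (Suc (Suc k)) / \<theta>"
  have "clique_poly n E (Suc k) (\<lambda>i. inverse s * y i)
      \<le> a + K * clique_poly n E (Suc (Suc k)) (\<lambda>i. inverse s * y i)"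
    unfolding a_def K_def
    by (rule clique_poly_supersaturation_simplex)
      (use y0 s \<theta> in \<open>simp_all add: s_def sum_distrib_left[symmetric]\<close>)
  then have "clique_poly n E (Suc k) y / s ^ Suc k
      \<le> a + K * (clique_poly n E (Suc (Suc k)) y / (s ^ Suc k * s))"
    by (simp add: clique_poly_scale power_inverse divide_inverse mult_ac)
  then have "clique_poly n E (Suc k) y \<le> (a + K * (clique_poly n E (Suc (Suc k)) y / (s ^ Suc k * s))) * s ^ Suc k"
    using s by (simp add: s_def pos_divide_le_eq)
  also have "\<dots> = a * s ^ Suc k + K * clique_poly n E (Suc (Suc k)) y / s"
    using s by (simp add: s_def field_simps)
  finally show ?thesis unfolding s_def a_def K_def .
qed

section \<open>Complete multipartite subhypergraphs\<close>

lemma power_le_pochhammer: "(x::real) \<ge> 0 \<Longrightarrow> x ^ t \<le> pochhammer x t"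
proof (induction t)
  case (Suc t)
  have "x ^ t * x \<le> pochhammer x t * (x + of_nat t)"
    using Suc by (intro mult_mono) (auto intro: order_trans[OF zero_le_power])
  then show ?case by (simp add: pochhammer_Suc mult.commute)
qed simp

lemma power_diff_le_fact_mult_choose: "(max (real d - real t) 0) ^ t \<le> fact t * real (d choose t)"
proof (cases "t \<le> d")
  case True
  have "fact t * real (d choose t) = pochhammer (real d - real t + 1) t"
    by (simp add: binomial_gbinomial gbinomial_pochhammer')
  moreover have "(real d - real t) ^ t \<le> (real d - real t + 1) ^ t"
    using True by (intro power_mono) auto
  moreover have "(real d - real t + 1) ^ t \<le> pochhammer (real d - real t + 1) t"
    using True by (intro power_le_pochhammer) auto
  ultimately show ?thesis using True by simp
qed (simp add: power_0_left)

lemma card_ksubsets_le_power: "card (ksubsets {0..<n} k) \<le> n ^ k"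
  using card_ksubsets[of "{0..<n}" k] binomial_le_pow[of k n] by (cases "k \<le> n") (auto simp: binomial_eq_0)

lemma sum_link_degrees:
  assumes W: "finite W" and H: "\<H> \<subseteq> ksubsets W (Suc k)"
  shows "(\<Sum>T\<in>ksubsets W k. card {x\<in>W. insert x T \<in> \<H>}) = Suc k * card \<H>"
proof -
  define f where "f v T = (if insert v T \<in> \<H> then 1 else 0 :: nat)" for v T
  have "(\<Sum>T\<in>ksubsets W k. card {x\<in>W. insert x T \<in> \<H>}) = (\<Sum>T\<in>ksubsets W k. \<Sum>x\<in>W. f x T)"
    unfolding f_def using W by (simp add: sum.inter_filter[symmetric])
  also have "\<dots> = (\<Sum>v\<in>W. \<Sum>T\<in>ksubsets W k. f v T)" by (rule sum.swap)
  also have "\<dots> = (\<Sum>v\<in>W. \<Sum>T\<in>ksubsets (W - {v}) k. f v T)"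
  proof (rule sum.cong[OF refl])
    fix v
    have "f v T = 0" if "T \<in> ksubsets W k - ksubsets (W - {v}) k" for T
    proof -
      have "insert v T = T" "card T = k" using that unfolding ksubsets_def by auto
      then show ?thesis using H unfolding f_def ksubsets_def by auto
    qed
    moreover have "ksubsets (W - {v}) k \<subseteq> ksubsets W k" unfolding ksubsets_def by auto
    ultimately show "(\<Sum>T\<in>ksubsets W k. f v T) = (\<Sum>T\<in>ksubsets (W - {v}) k. f v T)"
      using W by (intro sum.mono_neutral_right) auto
  qed
  also have "\<dots> = (\<Sum>S\<in>ksubsets W (Suc k). \<Sum>v\<in>S. f v (S - {v}))"
    by (rule sum_pointed_ksubsets[OF W, symmetric])
  also have "\<dots> = (\<Sum>S\<in>ksubsets W (Suc k). if S \<in> \<H> then Suc k else 0)"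
  proof (rule sum.cong[OF refl])
    fix S assume "S \<in> ksubsets W (Suc k)"
    then have "card S = Suc k" unfolding ksubsets_def by auto
    moreover have "\<And>v. v \<in> S \<Longrightarrow> insert v (S - {v}) = S" by auto
    ultimately show "(\<Sum>v\<in>S. f v (S - {v})) = (if S \<in> \<H> then Suc k else 0)"
      by (simp add: f_def)
  qed
  also have "\<dots> = Suc k * card \<H>"
    using H W by (simp add: sum.If_cases Int_absorb1 inf.absorb_iff2)
  finally show ?thesis .
qed

definition common_link :: "nat \<Rightarrow> nat set set \<Rightarrow> nat \<Rightarrow> nat set \<Rightarrow> nat set set" where
  "common_link n \<H> k X = {T\<in>ksubsets {0..<n} k. \<forall>x\<in>X. insert x T \<in> \<H>}"

lemma sum_card_common_link:
  "(\<Sum>X\<in>ksubsets {0..<n} t. card (common_link n \<H> k X))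
     = (\<Sum>T\<in>ksubsets {0..<n} k. card {x\<in>{0..<n}. insert x T \<in> \<H>} choose t)"
proof -
  let ?W = "{0..<n}" and ?N = "\<lambda>T. {x\<in>{0..<n}. insert x T \<in> \<H>}"
  have "(\<Sum>X\<in>ksubsets ?W t. card (common_link n \<H> k X))
      = (\<Sum>X\<in>ksubsets ?W t. \<Sum>T\<in>ksubsets ?W k. if X \<subseteq> ?N T then 1 else 0)"
  proof (rule sum.cong[OF refl])
    fix X assume "X \<in> ksubsets ?W t"
    then have "common_link n \<H> k X = {T\<in>ksubsets ?W k. X \<subseteq> ?N T}"
      unfolding common_link_def ksubsets_def by auto
    then show "card (common_link n \<H> k X) = (\<Sum>T\<in>ksubsets ?W k. if X \<subseteq> ?N T then 1 else 0)"
      by (simp add: sum.inter_filter[symmetric])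
  qed
  also have "\<dots> = (\<Sum>T\<in>ksubsets ?W k. \<Sum>X\<in>ksubsets ?W t. if X \<subseteq> ?N T then 1 else 0)"
    by (rule sum.swap)
  also have "\<dots> = (\<Sum>T\<in>ksubsets ?W k. card (?N T) choose t)"
  proof (rule sum.cong[OF refl])
    fix T
    have "{X\<in>ksubsets ?W t. X \<subseteq> ?N T} = ksubsets (?N T) t" unfolding ksubsets_def by auto
    then show "(\<Sum>X\<in>ksubsets ?W t. if X \<subseteq> ?N T then 1 else 0) = card (?N T) choose t"
      by (simp add: sum.inter_filter[symmetric] card_ksubsets)
  qed
  finally show ?thesis .
qed

text \<open>Double counting of link degrees, then the power mean inequality.\<close>
lemma sum_card_common_link_lower_bound:
  fixes c :: real
  assumes t: "t \<ge> 1" and c: "c > 0" and n: "real n \<ge> 2 * real t / c"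
    and H: "\<H> \<subseteq> ksubsets {0..<n} (Suc k)" and cH: "real (card \<H>) \<ge> c * real n ^ Suc k"
  shows "((c / 2) * real n ^ Suc k) ^ t
    \<le> real n ^ (k * (t - 1)) * fact t * (\<Sum>X\<in>ksubsets {0..<n} t. real (card (common_link n \<H> k X)))"
proof -
  let ?T = "ksubsets {0..<n} k"
  define d where "d T = card {x\<in>{0..<n}. insert x T \<in> \<H>}" for T
  define m where "m T = max (real (d T) - real t) 0" for T
  have M: "real (card ?T) \<le> real n ^ k"
    using card_ksubsets_le_power[of n k] by (simp flip: of_nat_power)
  have "(c / 2) * real n ^ Suc k \<le> (\<Sum>T\<in>?T. m T)"
  proof -
    have "(\<Sum>T\<in>?T. real (d T)) = real (Suc k) * card \<H>"
      using sum_link_degrees[OF _ H] unfolding d_def by (simp add: ring_distribs flip: of_nat_sum)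
    then have "(\<Sum>T\<in>?T. real (d T) - real t) = real (Suc k) * card \<H> - real (card ?T) * t"
      by (simp add: sum_subtractf)
    moreover have "real (card ?T) * t \<le> (c / 2) * real n ^ Suc k"
    proof -
      have "real (card ?T) * t \<le> real n ^ k * (c / 2 * real n)"
        using M n c by (intro mult_mono) (auto simp: field_simps)
      then show ?thesis by (simp add: mult_ac)
    qed
    moreover have "(\<Sum>T\<in>?T. real (d T) - real t) \<le> (\<Sum>T\<in>?T. m T)"
      by (rule sum_mono) (simp add: m_def)
    moreover have "real (card \<H>) \<le> real (Suc k) * card \<H>" by (simp add: algebra_simps)
    ultimately show ?thesis using cH by linarith
  qed
  then have "((c / 2) * real n ^ Suc k) ^ t \<le> (\<Sum>T\<in>?T. m T) ^ t"
    using c by (intro power_mono) auto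
  also have "\<dots> \<le> real (card ?T) ^ (t - 1) * (\<Sum>T\<in>?T. m T ^ t)"
    by (rule power_sum_le_card_power_mult_sum_power) (use t in \<open>auto simp: m_def\<close>)
  also have "\<dots> \<le> (real n ^ k) ^ (t - 1) * (fact t * (\<Sum>T\<in>?T. real (d T choose t)))"
  proof (rule mult_mono)
    show "real (card ?T) ^ (t - 1) \<le> (real n ^ k) ^ (t - 1)" using M by (intro power_mono) auto
    show "(\<Sum>T\<in>?T. m T ^ t) \<le> fact t * (\<Sum>T\<in>?T. real (d T choose t))"
      unfolding sum_distrib_left by (rule sum_mono) (simp add: m_def power_diff_le_fact_mult_choose)
  qed (auto simp: m_def intro: sum_nonneg)
  also have "\<dots> = real n ^ (k * (t - 1)) * fact t * (\<Sum>X\<in>ksubsets {0..<n} t. real (card (common_link n \<H> k X)))"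
    using sum_card_common_link[where n=n and t=t and \<H>=\<H> and k=k] unfolding d_def by (simp add: power_mult flip: of_nat_sum)
  finally show ?thesis .
qed

definition contains_complete_partite :: "nat \<Rightarrow> nat set set \<Rightarrow> nat \<Rightarrow> nat \<Rightarrow> bool" where
  "contains_complete_partite n \<H> k t \<longleftrightarrow> (\<exists>A. (\<forall>i<k. A i \<subseteq> {0..<n} \<and> card (A i) = t)
     \<and> (\<forall>i<k. \<forall>j<k. i \<noteq> j \<longrightarrow> A i \<inter> A j = {})
     \<and> (\<forall>f. (\<forall>i<k. f i \<in> A i) \<longrightarrow> f ` {0..<k} \<in> \<H>))"

lemma exists_dense_common_link:
  fixes c :: real
  assumes t: "t \<ge> 1" and c: "c > 0" and n: "n \<ge> 1" "real n \<ge> 2 * real t / c"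
    and H: "\<H> \<subseteq> ksubsets {0..<n} (Suc k)" and cH: "real (card \<H>) \<ge> c * real n ^ Suc k"
  shows "\<exists>X\<in>ksubsets {0..<n} t. real (card (common_link n \<H> k X)) \<ge> (c / 2) ^ t / (2 * fact t) * real n ^ k"
proof (rule ccontr)
  define c' where "c' = (c / 2) ^ t / (2 * fact t)"
  assume "\<not> ?thesis"
  then have "\<And>X. X \<in> ksubsets {0..<n} t \<Longrightarrow> real (card (common_link n \<H> k X)) \<le> c' * real n ^ k"
    unfolding c'_def by force
  then have "(\<Sum>X\<in>ksubsets {0..<n} t. real (card (common_link n \<H> k X)))
      \<le> real (card (ksubsets {0..<n} t)) * (c' * real n ^ k)"
    using sum_bounded_above[of "ksubsets {0..<n} t" _ "c' * real n ^ k"] by simp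
  also have "\<dots> \<le> real n ^ t * (c' * real n ^ k)"
    using card_ksubsets_le_power[of n t] c c'_def
    by (intro mult_right_mono) (auto simp flip: of_nat_power)
  finally have "((c / 2) * real n ^ Suc k) ^ t \<le> real n ^ (k * (t - 1)) * fact t * (real n ^ t * (c' * real n ^ k))"
    using sum_card_common_link_lower_bound[OF t c n(2) H cH]
    by (smt (verit) mult_left_mono fact_ge_zero mult_nonneg_nonneg zero_le_power of_nat_0_le_iff)
  also have "\<dots> = (c / 2) ^ t * real n ^ (k * (t - 1) + t + k) / 2"
    unfolding c'_def by (simp add: power_add field_simps)
  also have "k * (t - 1) + t + k = Suc k * t" using t by (cases t) (auto simp: algebra_simps)
  finally have "((c / 2) * real n ^ Suc k) ^ t \<le> (c / 2) ^ t * real n ^ (Suc k * t) / 2" .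
  moreover have "((c / 2) * real n ^ Suc k) ^ t = (c / 2) ^ t * real n ^ (Suc k * t)"
    by (simp only: power_mult_distrib power_mult[symmetric] mult.commute)
  moreover have "(c / 2) ^ t * real n ^ (Suc k * t) > 0" using c n by simp
  ultimately show False by linarith
qed

text \<open>A complete \<open>k\<close>-partite graph in the common link of \<open>X\<close> extends by the part \<open>X\<close>; the link
  only contains \<open>k\<close>-sets that are disjoint from \<open>X\<close>, so the parts stay disjoint.\<close>
lemma contains_complete_partite_extend:
  assumes t: "t \<ge> 1" and H: "\<H> \<subseteq> ksubsets {0..<n} (Suc k)" and X: "X \<in> ksubsets {0..<n} t"
    and link: "contains_complete_partite n (common_link n \<H> k X) k t"
  shows "contains_complete_partite n \<H> (Suc k) t"
proof -
  obtain A where A1: "\<forall>i<k. A i \<subseteq> {0..<n} \<and> card (A i) = t"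
    and A2: "\<forall>i<k. \<forall>j<k. i \<noteq> j \<longrightarrow> A i \<inter> A j = {}"
    and A3: "\<forall>f. (\<forall>i<k. f i \<in> A i) \<longrightarrow> f ` {0..<k} \<in> common_link n \<H> k X"
    using link unfolding contains_complete_partite_def by blast
  have Ane: "\<And>i. i < k \<Longrightarrow> A i \<noteq> {}" using A1 t by (metis card.empty not_one_le_zero)
  have disjX: "A i \<inter> X = {}" if i: "i < k" for i
  proof (rule ccontr)
    assume "A i \<inter> X \<noteq> {}"
    then obtain a where a: "a \<in> A i" "a \<in> X" by auto
    define f where "f j = (if j = i then a else SOME b. b \<in> A j)" for j
    have "\<forall>j<k. f j \<in> A j" using a Ane by (auto simp: f_def some_in_eq)
    then have T: "f ` {0..<k} \<in> common_link n \<H> k X" using A3 by blast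
    have "a \<in> f ` {0..<k}" using i by (auto simp: f_def image_iff intro!: bexI[of _ i])
    then have "insert a (f ` {0..<k}) = f ` {0..<k}" by auto
    moreover have "insert a (f ` {0..<k}) \<in> \<H>" using T a unfolding common_link_def by auto
    moreover have "card (f ` {0..<k}) = k" using T unfolding common_link_def ksubsets_def by auto
    ultimately show False using H unfolding ksubsets_def by auto
  qed
  show ?thesis
    unfolding contains_complete_partite_def
  proof (intro exI[of _ "A(k := X)"] conjI allI impI)
    fix i assume "i < Suc k"
    then show "(A(k := X)) i \<subseteq> {0..<n}" "card ((A(k := X)) i) = t"
      using A1 X unfolding ksubsets_def by (auto simp: less_Suc_eq)
  next
    fix i j assume "i < Suc k" "j < Suc k" "i \<noteq> j"
    then show "(A(k := X)) i \<inter> (A(k := X)) j = {}"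
      using A2 disjX by (auto simp: less_Suc_eq)
  next
    fix f assume f: "\<forall>i<Suc k. f i \<in> (A(k := X)) i"
    then have "\<forall>i<k. f i \<in> A i" by (metis fun_upd_other less_Suc_eq less_irrefl)
    then have "f ` {0..<k} \<in> common_link n \<H> k X" using A3 by blast
    moreover have "f k \<in> X" using f by auto
    ultimately have "insert (f k) (f ` {0..<k}) \<in> \<H>" unfolding common_link_def by auto
    moreover have "f ` {0..<Suc k} = insert (f k) (f ` {0..<k})" by (auto simp: less_Suc_eq)
    ultimately show "f ` {0..<Suc k} \<in> \<H>" by simp
  qed
qed

text \<open>Erd\<ouml>s' theorem on complete multipartite hypergraphs, proved by induction on the uniformity.\<close>
theorem dense_hypergraph_contains_complete_partite:
  fixes c :: real
  assumes t: "t \<ge> 1" and c: "c > 0"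
  shows "\<forall>\<^sub>F n in sequentially. \<forall>\<H>. \<H> \<subseteq> ksubsets {0..<n} k \<longrightarrow>
           real (card \<H>) \<ge> c * real n ^ k \<longrightarrow> contains_complete_partite n \<H> k t"
  using c
proof (induction k arbitrary: c)
  case 0
  have "{} \<in> \<H>" if "\<H> \<subseteq> ksubsets {0..<n} 0" "c * real n ^ 0 \<le> real (card \<H>)" for n \<H>
    using that 0 ksubsets_0[of "{0..<n}"] by (cases "\<H> = {}") auto
  then show ?case unfolding contains_complete_partite_def by auto
next
  case (Suc k)
  define c' where "c' = (c / 2) ^ t / (2 * fact t)"
  have "c' > 0" unfolding c'_def using Suc.prems by simp
  moreover have "\<forall>\<^sub>F n in sequentially. real n \<ge> 2 * real t / c"
    using filterlim_real_sequentially unfolding filterlim_at_top by blast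
  ultimately have "\<forall>\<^sub>F n in sequentially. n \<ge> 1 \<and> real n \<ge> 2 * real t / c \<and>
      (\<forall>\<H>. \<H> \<subseteq> ksubsets {0..<n} k \<longrightarrow> real (card \<H>) \<ge> c' * real n ^ k \<longrightarrow>
        contains_complete_partite n \<H> k t)"
    using Suc.IH eventually_ge_at_top[of 1] by (auto intro!: eventually_conj)
  then show ?case
  proof (rule eventually_mono, intro allI impI)
    fix n \<H> assume n: "n \<ge> 1 \<and> real n \<ge> 2 * real t / c \<and>
      (\<forall>\<H>. \<H> \<subseteq> ksubsets {0..<n} k \<longrightarrow> real (card \<H>) \<ge> c' * real n ^ k \<longrightarrow>
        contains_complete_partite n \<H> k t)"
      and H: "\<H> \<subseteq> ksubsets {0..<n} (Suc k)" and cH: "c * real n ^ Suc k \<le> real (card \<H>)"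
    obtain X where X: "X \<in> ksubsets {0..<n} t" and "real (card (common_link n \<H> k X)) \<ge> c' * real n ^ k"
      using exists_dense_common_link[OF t Suc.prems _ _ H cH] n unfolding c'_def by blast
    moreover have "common_link n \<H> k X \<subseteq> ksubsets {0..<n} k" unfolding common_link_def by auto
    ultimately show "contains_complete_partite n \<H> (Suc k) t"
      using n contains_complete_partite_extend[OF t H X] by blast
  qed
qed

section \<open>Counting cliques in \<open>H\<close>-free graphs\<close>

lemma proper_colouring_chromatic_number:
  assumes "simple_graph VH EH"
  shows "\<exists>f. proper_colouring VH EH (chromatic_number VH EH) f"
proof -
  obtain h where h: "bij_betw h VH {0..<card VH}"
    using ex_bij_betw_finite_nat assms unfolding simple_graph_def by blast
  then have "proper_colouring VH EH (card VH) h"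
    using assms unfolding proper_colouring_def simple_graph_def
    by (auto dest: bij_betwE bij_betw_imp_inj_on simp: inj_on_eq_iff)
  then have "\<exists>c f. proper_colouring VH EH c f" by blast
  then show ?thesis unfolding chromatic_number_def by (rule LeastI_ex)
qed

lemma transversal_cliques_adjacent:
  assumes ne: "\<forall>i<k. A i \<noteq> {}" and disj: "\<forall>i<k. \<forall>j<k. i \<noteq> j \<longrightarrow> A i \<inter> A j = {}"
    and cl: "\<forall>f. (\<forall>i<k. f i \<in> A i) \<longrightarrow> f ` {0..<k} \<in> cliques n E k"
    and ij: "i < k" "j < k" "i \<noteq> j" and ab: "a \<in> A i" "b \<in> A j"
  shows "E a b"
proof -
  define f where "f l = (if l = i then a else if l = j then b else SOME x. x \<in> A l)" for l
  have "\<forall>l<k. f l \<in> A l" using ne ab ij by (auto simp: f_def some_in_eq)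
  then have S: "f ` {0..<k} \<in> cliques n E k" using cl by blast
  have "a = f i" "b = f j" using ij(3) by (auto simp: f_def)
  then have "a \<in> f ` {0..<k}" "b \<in> f ` {0..<k}" using ij by auto
  moreover have "A i \<inter> A j = {}" using disj ij by blast
  then have "a \<noteq> b" using ab by auto
  ultimately show ?thesis using S unfolding cliques_def is_clique_def by blast
qed

lemma complete_partite_cliques_contains_subgraph:
  assumes fin: "finite VH" and col: "proper_colouring VH EH k col"
    and K: "contains_complete_partite n (cliques n E k) k (card VH)"
  shows "contains_subgraph n E VH EH"
proof -
  obtain A where A1: "\<forall>i<k. A i \<subseteq> {0..<n} \<and> card (A i) = card VH"
      and A2: "\<forall>i<k. \<forall>j<k. i \<noteq> j \<longrightarrow> A i \<inter> A j = {}"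
      and A3: "\<forall>f. (\<forall>i<k. f i \<in> A i) \<longrightarrow> f ` {0..<k} \<in> cliques n E k"
    using K unfolding contains_complete_partite_def by blast
  have "\<forall>i. \<exists>h. i < k \<longrightarrow> bij_betw h VH (A i)"
    using A1 finite_same_card_bij[OF fin] by (metis finite_atLeastLessThan finite_subset)
  then obtain \<psi> where \<psi>: "\<And>i. i < k \<Longrightarrow> bij_betw (\<psi> i) VH (A i)" by metis
  txt \<open>Colour class \<open>i\<close> of the copy of \<open>H\<close> is mapped into the part \<open>A i\<close>.\<close>
  define \<phi> where "\<phi> v = \<psi> (col v) v" for v
  have cl: "\<And>v. v \<in> VH \<Longrightarrow> col v < k" using col unfolding proper_colouring_def by auto
  have \<phi>A: "\<And>v. v \<in> VH \<Longrightarrow> \<phi> v \<in> A (col v)" unfolding \<phi>_def using \<psi> cl bij_betwE by blast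
  have \<phi>_ne: "\<phi> u \<noteq> \<phi> v" if uv: "u \<in> VH" "v \<in> VH" "col u \<noteq> col v" for u v
  proof -
    have "A (col u) \<inter> A (col v) = {}" using A2 cl uv by blast
    then show ?thesis using \<phi>A[OF uv(1)] \<phi>A[OF uv(2)] by auto
  qed
  show ?thesis unfolding contains_subgraph_def
  proof (intro exI[of _ \<phi>] conjI)
    show "inj_on \<phi> VH"
    proof (rule inj_onI)
      fix u v assume uv: "u \<in> VH" "v \<in> VH" "\<phi> u = \<phi> v"
      then have "col u = col v" using \<phi>_ne[OF uv(1,2)] by blast
      moreover have "inj_on (\<psi> (col u)) VH" using \<psi>[OF cl[OF uv(1)]] by (rule bij_betw_imp_inj_on)
      ultimately show "u = v" using uv unfolding \<phi>_def by (simp add: inj_on_eq_iff)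
    qed
    show "\<phi> ` VH \<subseteq> {0..<n}"
    proof (rule image_subsetI)
      fix v assume "v \<in> VH"
      then show "\<phi> v \<in> {0..<n}" using \<phi>A[of v] A1 cl[of v] by blast
    qed
    show "\<forall>u\<in>VH. \<forall>v\<in>VH. EH u v \<longrightarrow> E (\<phi> u) (\<phi> v)"
    proof (intro ballI impI)
      fix u v assume uv: "u \<in> VH" "v \<in> VH" "EH u v"
      have cuv: "col u \<noteq> col v" using col uv unfolding proper_colouring_def by auto
      have "card VH \<noteq> 0" using fin uv(1) by auto
      then have "\<forall>j<k. A j \<noteq> {}" using A1 by (metis card.empty)
      then show "E (\<phi> u) (\<phi> v)"
        using transversal_cliques_adjacent[OF _ A2 A3 cl[OF uv(1)] cl[OF uv(2)] cuv \<phi>A[OF uv(1)] \<phi>A[OF uv(2)]]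
        by blast
    qed
  qed
qed

lemma H_free_few_cliques:
  assumes sg: "simple_graph VH EH" and \<delta>: "\<delta> > 0"
  shows "\<forall>\<^sub>F n in sequentially. \<forall>E. H_free n E VH EH \<longrightarrow>
           real (card (cliques n E (chromatic_number VH EH))) < \<delta> * real n ^ chromatic_number VH EH"
proof (cases "VH = {}")
  case True
  then have "\<not> H_free n E VH EH" for n E unfolding H_free_def contains_subgraph_def by simp
  then show ?thesis by simp
next
  case False
  let ?k = "chromatic_number VH EH"
  have fin: "finite VH" using sg unfolding simple_graph_def by simp
  then have "card VH \<ge> 1" using False by (simp add: Suc_le_eq card_gt_0_iff)
  moreover obtain col where col: "proper_colouring VH EH ?k col"
    using proper_colouring_chromatic_number[OF sg] by blast
  ultimately have "\<forall>\<^sub>F n in sequentially. \<forall>\<H>. \<H> \<subseteq> ksubsets {0..<n} ?k \<longrightarrow>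
      real (card \<H>) \<ge> \<delta> * real n ^ ?k \<longrightarrow> contains_complete_partite n \<H> ?k (card VH)"
    using dense_hypergraph_contains_complete_partite[OF _ \<delta>] by blast
  then show ?thesis
  proof (rule eventually_mono, intro allI impI)
    fix n E assume dense: "\<forall>\<H>. \<H> \<subseteq> ksubsets {0..<n} ?k \<longrightarrow>
        real (card \<H>) \<ge> \<delta> * real n ^ ?k \<longrightarrow> contains_complete_partite n \<H> ?k (card VH)"
      and "H_free n E VH EH"
    then have "\<not> contains_complete_partite n (cliques n E ?k) ?k (card VH)"
      using complete_partite_cliques_contains_subgraph[OF fin col] unfolding H_free_def by blast
    then show "real (card (cliques n E ?k)) < \<delta> * real n ^ ?k"
      using dense cliques_subset_ksubsets by (meson not_less)
  qed
qed

section \<open>The clique spectral radius as a constrained maximum\<close>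

definition clique_poly_deriv ::
    "nat \<Rightarrow> (nat \<Rightarrow> nat \<Rightarrow> bool) \<Rightarrow> nat \<Rightarrow> (nat \<Rightarrow> 'c::comm_ring_1) \<Rightarrow> nat \<Rightarrow> 'c" where
  "clique_poly_deriv n E r y i = (\<Sum>S\<in>{S\<in>cliques n E r. i \<in> S}. \<Prod>j\<in>S - {i}. y j)"

lemma clique_tensor_support_lists:
  assumes cl: "insert i T \<in> cliques n E r" and iT: "i \<notin> T"
  shows "{js. (length js = r - 1 \<and> set js \<subseteq> {0..<n}) \<and> distinct (i # js)
            \<and> is_clique n E r (set (i # js)) \<and> set js = T} = permutations_of_set T"
proof -
  have "finite T" using finite_clique[OF cl] by simp
  moreover have "card T = r - 1" "T \<subseteq> {0..<n}" "is_clique n E r (insert i T)"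
    using cl iT \<open>finite T\<close> unfolding cliques_def is_clique_def by auto
  ultimately show ?thesis
    using iT by (auto simp: permutations_of_set_def distinct_card)
qed

text \<open>The factor \<open>1/(r-1)!\<close> in the clique tensor cancels the \<open>(r-1)!\<close> orderings of each clique
  through \<open>i\<close>, so \<open>\<A>x\<^sup>r\<^sup>-\<^sup>1\<close> is the gradient of the clique polynomial.\<close>
lemma tensor_apply_eq_clique_poly_deriv:
  assumes r: "r \<ge> 1"
  shows "tensor_apply n E r x i = clique_poly_deriv n E r x i"
proof -
  define L where "L = {js. length js = r - 1 \<and> set js \<subseteq> {0..<n}}"
  have fL: "finite L"
    unfolding L_def using finite_lists_length_eq[of "{0..<n}" "r - 1"] by (simp add: conj_commute)
  define L' where "L' = {js\<in>L. distinct (i # js) \<and> is_clique n E r (set (i # js))}"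
  define \<T> where "\<T> = {T. insert i T \<in> cliques n E r \<and> i \<notin> T}"
  define c where "c = complex_of_real (1 / fact (r - 1))"
  have "tensor_apply n E r x i = (\<Sum>js\<in>L. if js \<in> L' then c * (\<Prod>j\<leftarrow>js. x j) else 0)"
    unfolding tensor_apply_def L_def[symmetric]
    by (rule sum.cong[OF refl]) (auto simp: clique_tensor_def L'_def c_def)
  also have "\<dots> = (\<Sum>js\<in>L'. c * (\<Prod>j\<leftarrow>js. x j))"
    using fL by (simp add: sum.inter_filter[symmetric] L'_def)
  also have "\<dots> = (\<Sum>js\<in>L'. c * (\<Prod>j\<in>set js. x j))"
    by (rule sum.cong[OF refl]) (auto simp: L'_def prod.distinct_set_conv_list)
  also have "\<dots> = (\<Sum>T\<in>\<T>. \<Sum>js\<in>{js\<in>L'. set js = T}. c * (\<Prod>j\<in>set js. x j))"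
  proof (rule sum.group[symmetric])
    show "finite L'" using fL unfolding L'_def by simp
    show "finite \<T>"
      by (rule finite_subset[of _ "Pow {0..<n}"]) (auto simp: \<T>_def cliques_def is_clique_def)
    show "set ` L' \<subseteq> \<T>" by (auto simp: L'_def \<T>_def cliques_def)
  qed
  also have "\<dots> = (\<Sum>T\<in>\<T>. \<Prod>j\<in>T. x j)"
  proof (rule sum.cong[OF refl])
    fix T assume T: "T \<in> \<T>"
    then have "{js\<in>L'. set js = T} = permutations_of_set T"
      using clique_tensor_support_lists[of i T n E r] unfolding \<T>_def L'_def L_def by simp
    moreover have "finite T" "card T = r - 1"
      using T finite_clique[of "insert i T" n E r] card_clique[of "insert i T" n E r]
      by (auto simp: \<T>_def)
    moreover have "of_nat (fact (r - 1)) * c = 1" by (simp add: c_def of_real_divide)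
    moreover have "(\<Sum>js\<in>permutations_of_set T. c * (\<Prod>j\<in>set js. x j))
        = (\<Sum>js\<in>permutations_of_set T. c * (\<Prod>j\<in>T. x j))"
      by (rule sum.cong) (auto simp: permutations_of_set_def)
    ultimately show "(\<Sum>js\<in>{js\<in>L'. set js = T}. c * (\<Prod>j\<in>set js. x j)) = (\<Prod>j\<in>T. x j)"
      by (simp add: card_permutations_of_set mult.assoc[symmetric])
  qed
  also have "\<dots> = clique_poly_deriv n E r x i"
    unfolding clique_poly_deriv_def \<T>_def
    by (rule sum.reindex_bij_witness[of _ "\<lambda>S. S - {i}" "insert i"]) (auto simp: insert_absorb)
  finally show ?thesis .
qed

lemma clique_poly_deriv_of_real:
  "clique_poly_deriv n E r (\<lambda>j. complex_of_real (y j)) i = complex_of_real (clique_poly_deriv n E r y i)"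
  unfolding clique_poly_deriv_def by simp

lemma norm_clique_poly_deriv_le:
  "cmod (clique_poly_deriv n E r x i) \<le> clique_poly_deriv n E r (\<lambda>j. cmod (x j)) i"
  unfolding clique_poly_deriv_def by (rule order_trans[OF norm_sum]) (simp add: prod_norm)

lemma clique_poly_deriv_nonneg: "(\<And>j. y j \<ge> 0) \<Longrightarrow> clique_poly_deriv n E r y i \<ge> (0::real)"
  unfolding clique_poly_deriv_def by (intro sum_nonneg prod_nonneg) auto

lemma clique_poly_deriv_cong:
  "(\<And>j. j < n \<Longrightarrow> y j = y' j) \<Longrightarrow> clique_poly_deriv n E r y i = clique_poly_deriv n E r y' i"
  unfolding clique_poly_deriv_def by (intro sum.cong refl prod.cong) (auto simp: cliques_def is_clique_def)

lemma clique_poly_update: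
  "clique_poly n E r (y(k := y k + \<delta>)) = clique_poly n E r y + \<delta> * clique_poly_deriv n E r y k"
proof -
  have "(\<Prod>i\<in>S. (y(k := y k + \<delta>)) i) = (\<Prod>i\<in>S. y i) + (if k \<in> S then \<delta> * (\<Prod>j\<in>S - {k}. y j) else 0)"
    if S: "S \<in> cliques n E r" for S
  proof (cases "k \<in> S")
    case True
    have "(\<Prod>i\<in>S - {k}. (y(k := y k + \<delta>)) i) = (\<Prod>i\<in>S - {k}. y i)" by (rule prod.cong) auto
    then show ?thesis using True finite_clique[OF S] by (simp add: prod.remove algebra_simps)
  qed (auto intro!: prod.cong)
  then show ?thesis
    unfolding clique_poly_def clique_poly_deriv_def
    by (simp add: sum.distrib sum.If_cases sum_distrib_left Int_def conj_commute cong: sum.cong)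
qed

lemma sum_mult_clique_poly_deriv:
  "(\<Sum>i<n. y i * clique_poly_deriv n E r y i) = real r * clique_poly n E r (y :: nat \<Rightarrow> real)"
proof -
  have "y i * clique_poly_deriv n E r y i = (\<Sum>S\<in>{S\<in>cliques n E r. i \<in> S}. \<Prod>j\<in>S. y j)" for i
    unfolding clique_poly_deriv_def sum_distrib_left
    by (rule sum.cong[OF refl]) (auto simp: prod.remove finite_clique)
  then have "(\<Sum>i<n. y i * clique_poly_deriv n E r y i)
      = (\<Sum>i<n. \<Sum>S\<in>cliques n E r. if i \<in> S then (\<Prod>j\<in>S. y j) else 0)"
    by (simp add: sum.inter_filter)
  also have "\<dots> = (\<Sum>S\<in>cliques n E r. \<Sum>i<n. if i \<in> S then (\<Prod>j\<in>S. y j) else 0)"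
    by (rule sum.swap)
  also have "\<dots> = (\<Sum>S\<in>cliques n E r. real r * (\<Prod>j\<in>S. y j))"
  proof (rule sum.cong[OF refl])
    fix S assume S: "S \<in> cliques n E r"
    then have "S \<subseteq> {..<n}" unfolding cliques_def is_clique_def by auto
    then show "(\<Sum>i<n. if i \<in> S then (\<Prod>j\<in>S. y j) else 0) = real r * (\<Prod>j\<in>S. y j)"
      using card_clique[OF S] by (simp add: sum.If_cases Int_absorb1)
  qed
  finally show ?thesis unfolding clique_poly_def by (simp add: sum_distrib_left)
qed

definition nonneg_sphere :: "nat \<Rightarrow> nat \<Rightarrow> (nat \<Rightarrow> real) set" where
  "nonneg_sphere n r = {y. (\<forall>i. 0 \<le> y i) \<and> (\<forall>i. n \<le> i \<longrightarrow> y i = 0) \<and> (\<Sum>i<n. y i ^ r) = 1}"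

lemma compact_nonneg_sphere:
  assumes r: "r \<ge> 1"
  shows "compact (nonneg_sphere n r)"
proof -
  define B where "B = Pi UNIV (\<lambda>i. if i < n then {0..1} else {0::real})"
  have "compactin (product_topology (\<lambda>i. euclidean) UNIV) (PiE UNIV (\<lambda>i. if i < n then {0..1} else {0::real}))"
    by (simp add: compactin_PiE)
  then have "compact B" unfolding B_def PiE_UNIV_domain by (simp add: euclidean_product_topology)
  moreover have "closed {y::nat \<Rightarrow> real. (\<Sum>i<n. y i ^ r) = 1}"
    by (intro closed_Collect_eq continuous_on_sum continuous_on_power continuous_on_const)
      (simp add: continuous_on_product_coordinates)
  moreover have "nonneg_sphere n r = B \<inter> {y. (\<Sum>i<n. y i ^ r) = 1}"
  proof (intro set_eqI iffI)
    fix y assume y: "y \<in> nonneg_sphere n r"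
    have "y i \<le> 1" if i: "i < n" for i
    proof -
      have "y i ^ r \<le> (\<Sum>i<n. y i ^ r)"
        by (rule member_le_sum) (use i y in \<open>auto simp: nonneg_sphere_def\<close>)
      then show ?thesis using r y by (simp add: nonneg_sphere_def power_le_one_iff)
    qed
    then show "y \<in> B \<inter> {y. (\<Sum>i<n. y i ^ r) = 1}" using y by (auto simp: nonneg_sphere_def B_def not_less)
  next
    fix y assume y: "y \<in> B \<inter> {y. (\<Sum>i<n. y i ^ r) = 1}"
    then have yB: "\<And>i. y i \<in> (if i < n then {0..1} else {0})"
      unfolding B_def by (auto simp only: Pi_iff Int_iff mem_Collect_eq)
    have "0 \<le> y i" for i using yB[of i] by (cases "i < n") auto
    moreover have "n \<le> i \<Longrightarrow> y i = 0" for i using yB[of i] by auto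
    ultimately show "y \<in> nonneg_sphere n r" using y unfolding nonneg_sphere_def by auto
  qed
  ultimately show ?thesis by (simp add: compact_Int_closed)
qed

lemma continuous_on_clique_poly: "continuous_on S (clique_poly n E r)"
  unfolding clique_poly_def[abs_def]
  by (intro continuous_on_sum continuous_on_prod)
    (simp add: continuous_on_subset[OF continuous_on_product_coordinates])

lemma clique_poly_attains_max_on_sphere:
  assumes "n \<ge> 1" "r \<ge> 1"
  shows "\<exists>y\<in>nonneg_sphere n r. \<forall>z\<in>nonneg_sphere n r. clique_poly n E r z \<le> clique_poly n E r y"
proof (rule continuous_attains_sup[OF compact_nonneg_sphere[OF assms(2)] _ continuous_on_clique_poly])
  have "(\<Sum>i<n. (if i = 0 then 1 else 0 :: real) ^ r) = (\<Sum>i<n. if i = 0 then 1 else 0)"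
    by (rule sum.cong) (use assms(2) in auto)
  also have "\<dots> = 1" using assms(1) by (subst sum.delta) auto
  finally have "(\<Sum>i<n. (if i = 0 then 1 else 0 :: real) ^ r) = 1" .
  then have "(\<lambda>i. if i = 0 then 1 else 0) \<in> nonneg_sphere n r"
    unfolding nonneg_sphere_def using assms(1) by auto
  then show "nonneg_sphere n r \<noteq> {}" by blast
qed

lemma normalize_into_nonneg_sphere:
  assumes r: "r \<ge> 1" and a0: "\<And>i. a i \<ge> 0" and an: "\<And>i. n \<le> i \<Longrightarrow> a i = 0"
    and N: "(\<Sum>i<n. a i ^ r) > 0"
  defines "y \<equiv> \<lambda>i. inverse (root r (\<Sum>i<n. a i ^ r)) * a i"
  shows "y \<in> nonneg_sphere n r"
    and "clique_poly n E r y = clique_poly n E r a / (\<Sum>i<n. a i ^ r)"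
proof -
  define s where "s = inverse (root r (\<Sum>i<n. a i ^ r))"
  have s0: "s \<ge> 0" unfolding s_def using N by (simp add: real_root_ge_zero less_imp_le)
  have sr: "s ^ r = inverse (\<Sum>i<n. a i ^ r)"
    unfolding s_def using N r by (simp add: power_inverse real_root_pow_pos2)
  have "(\<Sum>i<n. (s * a i) ^ r) = s ^ r * (\<Sum>i<n. a i ^ r)"
    by (simp add: power_mult_distrib sum_distrib_left)
  then show "y \<in> nonneg_sphere n r"
    unfolding y_def s_def[symmetric] nonneg_sphere_def using s0 a0 an sr N by simp
  show "clique_poly n E r y = clique_poly n E r a / (\<Sum>i<n. a i ^ r)"
    unfolding y_def s_def[symmetric] clique_poly_scale sr by (simp add: field_simps)
qed

text \<open>Normalise the moduli of the entries of an eigenvector.\<close>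
lemma eigenvalue_norm_le_clique_poly:
  assumes r: "r \<ge> 1" and ev: "clique_eigenvalue n E r \<mu>"
  shows "\<exists>y\<in>nonneg_sphere n r. cmod \<mu> \<le> real r * clique_poly n E r y"
proof -
  obtain x where nz: "\<exists>i<n. x i \<noteq> 0" and eq: "\<forall>i<n. tensor_apply n E r x i = \<mu> * x i ^ (r - 1)"
    using ev unfolding clique_eigenvalue_def by blast
  define a where "a i = (if i < n then cmod (x i) else 0)" for i
  have a0: "\<And>i. a i \<ge> 0" and an: "\<And>i. n \<le> i \<Longrightarrow> a i = 0" unfolding a_def by auto
  have "cmod \<mu> * a i ^ r \<le> a i * clique_poly_deriv n E r a i" if i: "i < n" for i
  proof -
    have "cmod \<mu> * a i ^ (r - 1) = cmod (clique_poly_deriv n E r x i)"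
      using eq i tensor_apply_eq_clique_poly_deriv[OF r] by (simp add: a_def norm_mult norm_power)
    also have "\<dots> \<le> clique_poly_deriv n E r (\<lambda>j. cmod (x j)) i" by (rule norm_clique_poly_deriv_le)
    also have "\<dots> = clique_poly_deriv n E r a i" by (rule clique_poly_deriv_cong) (simp add: a_def)
    finally have "a i * (cmod \<mu> * a i ^ (r - 1)) \<le> a i * clique_poly_deriv n E r a i"
      using a0 by (simp add: mult_left_mono)
    then show ?thesis using r by (cases r) (auto simp: mult_ac)
  qed
  then have "cmod \<mu> * (\<Sum>i<n. a i ^ r) \<le> (\<Sum>i<n. a i * clique_poly_deriv n E r a i)"
    unfolding sum_distrib_left by (intro sum_mono) auto
  then have key: "cmod \<mu> * (\<Sum>i<n. a i ^ r) \<le> real r * clique_poly n E r a"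
    by (simp add: sum_mult_clique_poly_deriv)
  obtain i where i: "i < n" "x i \<noteq> 0" using nz by blast
  have "a i ^ r > 0" using i by (simp add: a_def)
  moreover have "a i ^ r \<le> (\<Sum>i<n. a i ^ r)" by (rule member_le_sum) (use i a0 in auto)
  ultimately have N: "(\<Sum>i<n. a i ^ r) > 0" by linarith
  have "cmod \<mu> \<le> real r * (clique_poly n E r a / (\<Sum>i<n. a i ^ r))"
    using key N by (simp add: pos_le_divide_eq)
  with normalize_into_nonneg_sphere[OF r a0 an N] show ?thesis
    by (intro bexI[of _ "\<lambda>i. inverse (root r (\<Sum>i<n. a i ^ r)) * a i"]) simp_all
qed

lemma clique_poly_max_variation:
  assumes r: "r \<ge> 1" and y: "y \<in> nonneg_sphere n r"
    and ymax: "\<forall>z\<in>nonneg_sphere n r. clique_poly n E r z \<le> clique_poly n E r y"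
    and k: "k < n" and d: "y k + \<delta> > 0"
  shows "\<delta> * clique_poly_deriv n E r y k \<le> clique_poly n E r y * ((y k + \<delta>) ^ r - y k ^ r)"
proof -
  have y0: "\<And>i. y i \<ge> 0" and yn: "\<And>i. n \<le> i \<Longrightarrow> y i = 0" and y1: "(\<Sum>i<n. y i ^ r) = 1"
    using y unfolding nonneg_sphere_def by auto
  define z where "z = y(k := y k + \<delta>)"
  have z0: "\<And>i. z i \<ge> 0" unfolding z_def using y0 d by (auto intro: less_imp_le)
  have zn: "\<And>i. n \<le> i \<Longrightarrow> z i = 0" unfolding z_def using yn k by auto
  have "(\<Sum>i<n. z i ^ r) = z k ^ r + (\<Sum>i\<in>{..<n} - {k}. y i ^ r)"
    using k by (simp add: sum.remove z_def)
  moreover have "(\<Sum>i<n. y i ^ r) = y k ^ r + (\<Sum>i\<in>{..<n} - {k}. y i ^ r)"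
    using k by (simp add: sum.remove)
  ultimately have Nz: "(\<Sum>i<n. z i ^ r) = 1 - y k ^ r + (y k + \<delta>) ^ r"
    using y1 by (simp add: z_def)
  have "z k ^ r > 0" using d by (simp add: z_def)
  moreover have "z k ^ r \<le> (\<Sum>i<n. z i ^ r)" by (rule member_le_sum) (use k z0 in auto)
  ultimately have Npos: "(\<Sum>i<n. z i ^ r) > 0" by linarith
  have "clique_poly n E r z / (\<Sum>i<n. z i ^ r) \<le> clique_poly n E r y"
    using ymax normalize_into_nonneg_sphere[OF r z0 zn Npos] by metis
  then have "clique_poly n E r z \<le> clique_poly n E r y * (\<Sum>i<n. z i ^ r)"
    using Npos by (simp add: divide_le_eq)
  moreover have "clique_poly n E r z = clique_poly n E r y + \<delta> * clique_poly_deriv n E r y k"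
    unfolding z_def by (rule clique_poly_update)
  ultimately have "clique_poly n E r y + \<delta> * clique_poly_deriv n E r y k
      \<le> clique_poly n E r y * (1 - y k ^ r + (y k + \<delta>) ^ r)"
    using Nz by simp
  then show ?thesis by (simp add: algebra_simps)
qed

text \<open>First-order conditions at a maximiser: Lagrange multiplier \<open>r P(y)\<close> at positive coordinates,
  and a vanishing derivative at zero coordinates because \<open>\<delta>\<^sup>r = o(\<delta>)\<close> for \<open>r \<ge> 2\<close>.\<close>
lemma clique_poly_max_stationary:
  assumes r: "r \<ge> 2" and y: "y \<in> nonneg_sphere n r"
    and ymax: "\<forall>z\<in>nonneg_sphere n r. clique_poly n E r z \<le> clique_poly n E r y"
    and k: "k < n"
  shows "clique_poly_deriv n E r y k = real r * clique_poly n E r y * y k ^ (r - 1)"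
proof -
  let ?D = "clique_poly_deriv n E r y k" and ?P = "clique_poly n E r y"
  have y0: "\<And>i. y i \<ge> 0" using y unfolding nonneg_sphere_def by auto
  have P0: "?P \<ge> 0" using clique_poly_nonneg[OF y0] .
  note var = clique_poly_max_variation[OF _ y ymax k]
  show ?thesis
  proof (cases "y k > 0")
    case True
    define \<phi> where "\<phi> \<delta> = \<delta> * ?D - ?P * ((y k + \<delta>) ^ r - y k ^ r)" for \<delta>
    have "DERIV \<phi> 0 :> ?D - ?P * (real r * y k ^ (r - 1))"
      unfolding \<phi>_def by (rule derivative_eq_intros refl | simp)+
    moreover have "\<forall>h. \<bar>0 - h\<bar> < y k \<longrightarrow> \<phi> h \<le> \<phi> 0"
    proof (intro allI impI)
      fix h assume "\<bar>0 - h\<bar> < y k"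
      then have "y k + h > 0" by linarith
      then show "\<phi> h \<le> \<phi> 0" using var[of h] r unfolding \<phi>_def by simp
    qed
    ultimately have "?D - ?P * (real r * y k ^ (r - 1)) = 0"
      by (rule DERIV_local_max[OF _ True])
    then show ?thesis by (simp add: algebra_simps)
  next
    case False
    then have yk: "y k = 0" using y0[of k] by simp
    have "?D \<le> 0"
    proof (rule ccontr)
      assume "\<not> ?D \<le> 0"
      define \<delta> where "\<delta> = min 1 (?D / (?P + 1))"
      have \<delta>: "\<delta> > 0" "\<delta> \<le> 1" "?P * \<delta> < ?D"
        using \<open>\<not> ?D \<le> 0\<close> P0 by (auto simp: \<delta>_def min_def field_simps split: if_splits)
      have "\<delta> * ?D \<le> ?P * \<delta> ^ r" using var[of \<delta>] yk \<delta> r by (simp add: power_0_left)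
      also have "\<dots> \<le> ?P * \<delta> ^ 2" using \<delta> r P0 by (intro mult_left_mono power_decreasing) auto
      also have "\<dots> < \<delta> * ?D" using \<delta> by (simp add: power2_eq_square mult_ac)
      finally show False by simp
    qed
    then show ?thesis using clique_poly_deriv_nonneg[of y n E r k] y0 yk r by simp
  qed
qed

lemma clique_poly_max_eigenvalue:
  assumes r: "r \<ge> 2" and y: "y \<in> nonneg_sphere n r"
    and ymax: "\<forall>z\<in>nonneg_sphere n r. clique_poly n E r z \<le> clique_poly n E r y"
  shows "clique_eigenvalue n E r (complex_of_real (real r * clique_poly n E r y))"
  unfolding clique_eigenvalue_def
proof (intro exI[of _ "\<lambda>j. complex_of_real (y j)"] conjI allI impI)
  show "\<exists>i<n. complex_of_real (y i) \<noteq> 0"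
  proof (rule ccontr)
    assume "\<not> ?thesis"
    then have "(\<Sum>i<n. y i ^ r) = 0" using r by simp
    then show False using y unfolding nonneg_sphere_def by simp
  qed
next
  fix i assume i: "i < n"
  show "tensor_apply n E r (\<lambda>j. complex_of_real (y j)) i
      = complex_of_real (real r * clique_poly n E r y) * complex_of_real (y i) ^ (r - 1)"
    using tensor_apply_eq_clique_poly_deriv[of r] clique_poly_deriv_of_real
      clique_poly_max_stationary[OF r y ymax i] r by simp
qed

lemma clique_spectral_radius_eq_max:
  assumes r: "r \<ge> 2" and y: "y \<in> nonneg_sphere n r"
    and ymax: "\<forall>z\<in>nonneg_sphere n r. clique_poly n E r z \<le> clique_poly n E r y"
  shows "clique_spectral_radius n E r = real r * clique_poly n E r y"
  unfolding clique_spectral_radius_def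
proof (rule cSup_eq_maximum)
  have "clique_poly n E r y \<ge> 0" using y clique_poly_nonneg unfolding nonneg_sphere_def by blast
  then show "real r * clique_poly n E r y \<in> cmod ` {\<mu>. clique_eigenvalue n E r \<mu>}"
    using clique_poly_max_eigenvalue[OF r y ymax]
    by (intro image_eqI[of _ _ "complex_of_real (real r * clique_poly n E r y)"]) (auto simp: norm_mult)
next
  fix v assume "v \<in> cmod ` {\<mu>. clique_eigenvalue n E r \<mu>}"
  then obtain \<mu> where v: "v = cmod \<mu>" and ev: "clique_eigenvalue n E r \<mu>" by auto
  obtain y' where "y' \<in> nonneg_sphere n r" "cmod \<mu> \<le> real r * clique_poly n E r y'"
    using eigenvalue_norm_le_clique_poly[OF _ ev] r by auto
  then show "v \<le> real r * clique_poly n E r y"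
    using ymax v by (smt (verit) mult_left_mono of_nat_0_le_iff)
qed

lemma clique_spectral_radius_le:
  assumes n: "n \<ge> 1" and r: "r \<ge> 2"
    and B: "\<And>y. y \<in> nonneg_sphere n r \<Longrightarrow> real r * clique_poly n E r y \<le> B"
  shows "clique_spectral_radius n E r \<le> B"
  using clique_poly_attains_max_on_sphere[OF n, of r E] clique_spectral_radius_eq_max[OF r] B r by force

lemma clique_poly_le_clique_spectral_radius:
  assumes n: "n \<ge> 1" and r: "r \<ge> 2" and y: "y \<in> nonneg_sphere n r"
  shows "real r * clique_poly n E r y \<le> clique_spectral_radius n E r"
proof -
  obtain y' where "y' \<in> nonneg_sphere n r" "\<forall>z\<in>nonneg_sphere n r. clique_poly n E r z \<le> clique_poly n E r y'"
    using clique_poly_attains_max_on_sphere[OF n, of r E] r by auto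
  then show ?thesis using clique_spectral_radius_eq_max[OF r] y by (simp add: mult_left_mono)
qed

section \<open>Upper bound\<close>

lemma sum_power_le_on_nonneg_sphere:
  assumes y: "y \<in> nonneg_sphere n r" and r: "r \<ge> 1"
  shows "(\<Sum>i<n. y i) ^ r \<le> real n ^ (r - 1)"
  using power_sum_le_card_power_mult_sum_power[of "{..<n}" y r] y r
  by (simp add: nonneg_sphere_def)

lemma heavy_weight_le:
  assumes y: "y \<in> nonneg_sphere n r" and r: "r \<ge> 1" and \<tau>: "\<tau> > 0"
  shows "(\<Sum>i<n. if y i > \<tau> then y i else 0) * \<tau> ^ (r - 1) \<le> 1"
proof -
  have "(if y i > \<tau> then y i else 0) * \<tau> ^ (r - 1) \<le> y i ^ r" for i
  proof (cases "y i > \<tau>")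
    case True
    then have "y i * \<tau> ^ (r - 1) \<le> y i * y i ^ (r - 1)"
      using \<tau> by (intro mult_left_mono power_mono) auto
    then show ?thesis using True r by (cases r) auto
  qed (use y in \<open>auto simp: nonneg_sphere_def\<close>)
  then have "(\<Sum>i<n. if y i > \<tau> then y i else 0) * \<tau> ^ (r - 1) \<le> (\<Sum>i<n. y i ^ r)"
    unfolding sum_distrib_right by (rule sum_mono)
  then show ?thesis using y by (simp add: nonneg_sphere_def)
qed

lemma sum_pointed_cliques_le:
  fixes h y :: "nat \<Rightarrow> real"
  assumes h0: "\<And>i. h i \<ge> 0" and y0: "\<And>i. y i \<ge> 0"
  shows "(\<Sum>T\<in>cliques n E (Suc r). \<Sum>v\<in>T. h v * (\<Prod>i\<in>T - {v}. y i))
    \<le> (\<Sum>i<n. h i) * (\<Sum>i<n. y i) ^ r"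
proof -
  define W where "W = {0..<n}"
  have fW: "finite W" unfolding W_def by simp
  have "(\<Sum>T\<in>cliques n E (Suc r). \<Sum>v\<in>T. h v * (\<Prod>i\<in>T - {v}. y i))
      \<le> (\<Sum>T\<in>ksubsets W (Suc r). \<Sum>v\<in>T. h v * (\<Prod>i\<in>T - {v}. y i))"
    by (rule sum_mono2)
      (use fW h0 y0 cliques_subset_ksubsets in \<open>auto simp: W_def intro!: sum_nonneg mult_nonneg_nonneg prod_nonneg\<close>)
  also have "\<dots> = (\<Sum>v\<in>W. h v * elem_sym (W - {v}) r y)"
    unfolding sum_pointed_ksubsets[OF fW, where f="\<lambda>v T. h v * (\<Prod>i\<in>T. y i)"] elem_sym_def
    by (simp add: sum_distrib_left)
  also have "\<dots> \<le> (\<Sum>v\<in>W. h v * (\<Sum>i\<in>W. y i) ^ r)"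
  proof (rule sum_mono)
    fix v assume v: "v \<in> W"
    have "elem_sym (W - {v}) r y \<le> elem_sym W r y" by (rule elem_sym_mono) (use fW y0 in auto)
    also have "\<dots> \<le> (\<Sum>i\<in>W. y i) ^ r" by (rule elem_sym_le_power_sum) (use fW y0 in auto)
    finally show "h v * elem_sym (W - {v}) r y \<le> h v * (\<Sum>i\<in>W. y i) ^ r" using h0 by (simp add: mult_left_mono)
  qed
  also have "\<dots> = (\<Sum>i<n. h i) * (\<Sum>i<n. y i) ^ r"
    unfolding W_def by (simp add: sum_distrib_right atLeast0LessThan)
  finally show ?thesis .
qed

text \<open>An \<open>(r+1)\<close>-clique either has all weights at most \<open>\<tau>\<close>, or it is charged to one of its
  vertices of weight larger than \<open>\<tau>\<close>.\<close>
lemma clique_poly_Suc_le_light_heavy: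
  assumes \<tau>: "\<tau> > 0" and y0: "\<And>i. y i \<ge> 0"
  shows "clique_poly n E (Suc r) y \<le> \<tau> ^ Suc r * real (card (cliques n E (Suc r)))
           + (\<Sum>i<n. if y i > \<tau> then y i else 0) * (\<Sum>i<n. y i) ^ r"
proof -
  define h where "h i = (if y i > \<tau> then y i else 0)" for i
  have h0: "\<And>i. h i \<ge> 0" unfolding h_def using y0 by auto
  have "(\<Prod>i\<in>T. y i) \<le> \<tau> ^ Suc r + (\<Sum>v\<in>T. h v * (\<Prod>i\<in>T - {v}. y i))"
    if T: "T \<in> cliques n E (Suc r)" for T
  proof (cases "\<forall>i\<in>T. y i \<le> \<tau>")
    case True
    have "(\<Prod>i\<in>T. y i) \<le> (\<Prod>i\<in>T. \<tau>)" by (rule prod_mono) (use True y0 in auto)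
    also have "\<dots> = \<tau> ^ Suc r" using card_clique[OF T] by simp
    finally show ?thesis using h0 y0 by (smt (verit) prod_nonneg sum_nonneg mult_nonneg_nonneg)
  next
    case False
    then obtain v where v: "v \<in> T" "y v > \<tau>" by auto
    have "(\<Prod>i\<in>T. y i) = h v * (\<Prod>i\<in>T - {v}. y i)"
      using v finite_clique[OF T] by (simp add: h_def prod.remove)
    also have "\<dots> \<le> (\<Sum>v\<in>T. h v * (\<Prod>i\<in>T - {v}. y i))"
      by (rule member_le_sum) (use v finite_clique[OF T] h0 y0 in \<open>auto intro!: mult_nonneg_nonneg prod_nonneg\<close>)
    finally show ?thesis using \<tau> by (smt (verit) zero_less_power)
  qed
  then have "clique_poly n E (Suc r) y
      \<le> (\<Sum>T\<in>cliques n E (Suc r). \<tau> ^ Suc r + (\<Sum>v\<in>T. h v * (\<Prod>i\<in>T - {v}. y i)))"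
    unfolding clique_poly_def by (rule sum_mono)
  also have "\<dots> = \<tau> ^ Suc r * real (card (cliques n E (Suc r)))
      + (\<Sum>T\<in>cliques n E (Suc r). \<Sum>v\<in>T. h v * (\<Prod>i\<in>T - {v}. y i))"
    by (simp add: sum.distrib)
  also have "\<dots> \<le> \<tau> ^ Suc r * real (card (cliques n E (Suc r))) + (\<Sum>i<n. h i) * (\<Sum>i<n. y i) ^ r"
    using sum_pointed_cliques_le[OF h0 y0, where n=n and E=E and r=r] by (rule add_left_mono)
  finally show ?thesis unfolding h_def .
qed

lemma clique_poly_le_of_small_sum:
  assumes r: "r \<ge> 1" and y0: "\<And>i. y i \<ge> 0"
    and s: "(\<Sum>i<n. y i) \<le> root r (real n) ^ (r - 1) / real r"
  shows "real r * clique_poly n E r y \<le> real n ^ (r - 1) / real r ^ (r - 1)"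
proof -
  have "real r * clique_poly n E r y \<le> real r * (\<Sum>i<n. y i) ^ r"
    using clique_poly_le_power_sum[OF y0] by (simp add: mult_left_mono)
  also have "\<dots> \<le> real r * (root r (real n) ^ (r - 1) / real r) ^ r"
    using s y0 by (intro mult_left_mono power_mono sum_nonneg) auto
  also have "\<dots> = real r * ((root r (real n) ^ (r - 1)) ^ r / (real r * real r ^ (r - 1)))"
    using r by (simp add: power_divide power_eq_if[of "real r" r])
  also have "(root r (real n) ^ (r - 1)) ^ r = (root r (real n) ^ r) ^ (r - 1)"
    by (metis power_mult mult.commute)
  also have "\<dots> = real n ^ (r - 1)" using r by (simp add: real_root_pow_pos2)
  finally show ?thesis using r by simp
qed

lemma real_root_power_identities:
  assumes "r \<ge> 1" "n \<ge> 1"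
  shows "root r (real n) > 0" "root r (real n) ^ (r - 1) * root r (real n) = real n"
    "(root r (real n) ^ (r - 1)) ^ r = real n ^ (r - 1)"
proof -
  have "root r (real n) ^ r = real n" using assms by (simp add: real_root_pow_pos2)
  then show "root r (real n) > 0" "root r (real n) ^ (r - 1) * root r (real n) = real n"
    "(root r (real n) ^ (r - 1)) ^ r = real n ^ (r - 1)"
    using assms by (auto simp: power_Suc2[symmetric] power_mult[symmetric] mult.commute[of _ r] power_mult)
qed

lemma light_cliques_term_le:
  fixes C \<delta> s :: real
  assumes r: "r \<ge> 2" and n: "n \<ge> 1" and C: "C \<ge> 0" and \<delta>: "\<delta> \<ge> 0"
    and s: "s > root r (real n) ^ (r - 1) / real r"
  shows "(C / root r (real n)) ^ Suc r * (\<delta> * real n ^ Suc r) / s \<le> C ^ Suc r * \<delta> * real r * real n ^ (r - 1)"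
proof -
  define \<nu> where "\<nu> = root r (real n)"
  define \<sigma> where "\<sigma> = \<nu> ^ (r - 1)"
  have \<nu>: "\<nu> > 0" "\<sigma> * \<nu> = real n" "\<nu> ^ r = real n"
    using real_root_power_identities[of r n] r n by (auto simp: \<nu>_def \<sigma>_def real_root_pow_pos2)
  have s0: "s > \<sigma> / real r" using s unfolding \<sigma>_def \<nu>_def .
  have \<sigma>0: "\<sigma> > 0" using \<nu>(1) by (simp add: \<sigma>_def)
  then have "\<sigma> / real r \<ge> 0" by simp
  then have spos: "s > 0" using s0 by linarith
  have "1 / s \<le> r / \<sigma>" using s0 spos \<sigma>0 r by (simp add: field_simps)
  then have "(C / \<nu>) ^ Suc r * (\<delta> * real n ^ Suc r) * (1 / s)
      \<le> (C / \<nu>) ^ Suc r * (\<delta> * real n ^ Suc r) * (r / \<sigma>)"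
    using \<nu> C \<delta> by (intro mult_left_mono) auto
  then have "(C / \<nu>) ^ Suc r * (\<delta> * real n ^ Suc r) / s
      \<le> (C / \<nu>) ^ Suc r * (\<delta> * real n ^ Suc r) * (r / \<sigma>)" by simp
  also have "\<dots> = C ^ Suc r * \<delta> * real r * (real n ^ Suc r / (\<nu> ^ Suc r * \<sigma>))"
    by (simp add: power_divide field_simps)
  also have "\<nu> ^ Suc r * \<sigma> = real n * real n" using \<nu>(2,3) by (simp add: mult_ac)
  also have "real n ^ Suc r / (real n * real n) = real n ^ (r - 1)"
    using n r by (cases r) (auto simp: field_simps)
  finally show ?thesis unfolding \<nu>_def .
qed

lemma heavy_weight_term_le:
  fixes C h s :: real
  assumes r: "r \<ge> 2" and n: "n \<ge> 1" and C: "C \<ge> 1"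
    and h: "h \<ge> 0" "h * (C / root r (real n)) ^ (r - 1) \<le> 1"
    and s: "s > 0" "s ^ r \<le> real n ^ (r - 1)"
  shows "h * s ^ r / s \<le> real n ^ (r - 1) / C"
proof -
  define \<nu> where "\<nu> = root r (real n)"
  define \<sigma> where "\<sigma> = \<nu> ^ (r - 1)"
  have \<nu>: "\<nu> > 0" "\<sigma> * \<nu> = real n" "\<sigma> ^ r = real n ^ (r - 1)"
    using real_root_power_identities[of r n] r n by (auto simp: \<nu>_def \<sigma>_def)
  have "\<sigma> \<ge> 0" using \<nu>(1) by (simp add: \<sigma>_def)
  moreover have "s ^ r \<le> \<sigma> ^ r" using s(2) \<nu>(3) by simp
  ultimately have "s \<le> \<sigma>" using power_mono_iff[of s \<sigma> r] s(1) r by simp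
  have "h * s ^ r / s = h * s ^ (r - 1)" using s r by (cases r) auto
  also have "\<dots> \<le> h * \<sigma> ^ (r - 1)" using h \<open>s \<le> \<sigma>\<close> s by (intro mult_left_mono power_mono) auto
  also have "\<sigma> = (C / \<nu>) * (real n / C)"
    using \<nu> C by (auto simp: field_simps)
  also have "h * ((C / \<nu>) * (real n / C)) ^ (r - 1) = h * (C / \<nu>) ^ (r - 1) * (real n / C) ^ (r - 1)"
    by (simp only: power_mult_distrib mult.assoc)
  also have "\<dots> \<le> (real n / C) ^ (r - 1)" using h n C \<nu> by (intro mult_left_le_one_le) (auto simp: \<nu>_def)
  also have "\<dots> = real n ^ (r - 1) / C ^ (r - 1)" by (simp add: power_divide)
  also have "\<dots> \<le> real n ^ (r - 1) / C"
    using C r power_increasing[of 1 "r - 1" C] by (intro divide_left_mono) auto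
  finally show ?thesis .
qed

text \<open>With the threshold \<open>\<tau> = C n\<^sup>-\<^sup>1\<^sup>/\<^sup>r\<close>: light \<open>(r+1)\<close>-cliques are few, and the heavy weight
  is at most \<open>\<tau>\<^sup>1\<^sup>-\<^sup>r\<close>.\<close>
lemma clique_poly_Suc_div_sum_le:
  fixes C \<delta> :: real
  assumes r: "r \<ge> 2" and y: "y \<in> nonneg_sphere n r" and n: "n \<ge> 1" and C: "C \<ge> 1" and \<delta>: "\<delta> \<ge> 0"
    and few: "real (card (cliques n E (Suc r))) \<le> \<delta> * real n ^ Suc r"
    and s: "(\<Sum>i<n. y i) > root r (real n) ^ (r - 1) / real r"
  shows "clique_poly n E (Suc r) y / (\<Sum>i<n. y i) \<le> (C ^ Suc r * \<delta> * real r + 1 / C) * real n ^ (r - 1)"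
proof -
  define \<tau> where "\<tau> = C / root r (real n)"
  define s where "s = (\<Sum>i<n. y i)"
  define h where "h = (\<Sum>i<n. if y i > \<tau> then y i else 0)"
  have y0: "\<And>i. y i \<ge> 0" using y unfolding nonneg_sphere_def by auto
  have \<tau>: "\<tau> > 0" using real_root_power_identities(1)[of r n] r n C by (simp add: \<tau>_def)
  have "root r (real n) ^ (r - 1) / real r \<ge> 0" using \<tau> by (simp add: real_root_ge_zero)
  then have spos: "s > 0" using s unfolding s_def by linarith
  have h: "h \<ge> 0" "h * \<tau> ^ (r - 1) \<le> 1"
    using heavy_weight_le[OF y _ \<tau>] r y0 unfolding h_def by (auto intro: sum_nonneg)
  have "\<tau> ^ Suc r * real (card (cliques n E (Suc r))) \<le> \<tau> ^ Suc r * (\<delta> * real n ^ Suc r)"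
    using few \<tau> by (intro mult_left_mono) auto
  moreover have "clique_poly n E (Suc r) y \<le> \<tau> ^ Suc r * real (card (cliques n E (Suc r))) + h * s ^ r"
    unfolding h_def s_def by (rule clique_poly_Suc_le_light_heavy[OF \<tau> y0])
  ultimately have "clique_poly n E (Suc r) y \<le> \<tau> ^ Suc r * (\<delta> * real n ^ Suc r) + h * s ^ r"
    by linarith
  then have "clique_poly n E (Suc r) y / s \<le> (\<tau> ^ Suc r * (\<delta> * real n ^ Suc r) + h * s ^ r) / s"
    using spos by (intro divide_right_mono) auto
  also have "\<dots> = \<tau> ^ Suc r * (\<delta> * real n ^ Suc r) / s + h * s ^ r / s"
    by (rule add_divide_distrib)
  also have "\<dots> \<le> C ^ Suc r * \<delta> * real r * real n ^ (r - 1) + real n ^ (r - 1) / C"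
    using light_cliques_term_le[OF r n _ \<delta> s] heavy_weight_term_le[OF r n C h[unfolded \<tau>_def] spos]
      sum_power_le_on_nonneg_sphere[OF y] r C
    unfolding \<tau>_def s_def by (intro add_mono) auto
  finally show ?thesis unfolding s_def by (simp add: algebra_simps)
qed

lemma clique_poly_le_of_few_cliques:
  fixes \<theta> C \<delta> :: real
  assumes r: "r \<ge> 2" and y: "y \<in> nonneg_sphere n r" and n: "n \<ge> 1"
    and \<theta>: "\<theta> > 0" and C: "C \<ge> 1" and \<delta>: "\<delta> \<ge> 0"
    and few: "real (card (cliques n E (Suc r))) \<le> \<delta> * real n ^ Suc r"
  shows "real r * clique_poly n E r y \<le> (1 / real r ^ (r - 1) + real r * \<theta>
           + real r * (real (Suc r) / \<theta>) * (C ^ Suc r * \<delta> * real r + 1 / C)) * real n ^ (r - 1)"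
proof -
  define s where "s = (\<Sum>i<n. y i)"
  define K where "K = real (Suc r) / \<theta>"
  define B where "B = C ^ Suc r * \<delta> * real r + 1 / C"
  have y0: "\<And>i. y i \<ge> 0" using y unfolding nonneg_sphere_def by auto
  have "K \<ge> 0" "B \<ge> 0" using \<theta> C \<delta> by (auto simp: K_def B_def)
  then have extra: "0 \<le> (real r * \<theta> + real r * K * B) * real n ^ (r - 1)" using \<theta> by simp
  show ?thesis
  proof (cases "s \<le> root r (real n) ^ (r - 1) / real r")
    case True
    then have "real r * clique_poly n E r y \<le> real n ^ (r - 1) / real r ^ (r - 1)"
      using clique_poly_le_of_small_sum[OF _ y0] r unfolding s_def by simp
    then show ?thesis using extra unfolding K_def[symmetric] B_def[symmetric] by (simp add: algebra_simps)
  next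
    case False
    then have Q: "clique_poly n E (Suc r) y / s \<le> B * real n ^ (r - 1)"
      using clique_poly_Suc_div_sum_le[OF r y n C \<delta> few] unfolding s_def B_def by simp
    have "root r (real n) ^ (r - 1) / real r \<ge> 0"
      by (intro divide_nonneg_nonneg zero_le_power real_root_ge_zero) auto
    then have "s > 0" using False by linarith
    then have "clique_poly n E r y \<le> (1 / real r ^ r + \<theta>) * s ^ r + K * (clique_poly n E (Suc r) y / s)"
      using clique_poly_supersaturation[OF y0 _ \<theta>, where n=n and E=E and k="r - 1"] r
      unfolding s_def K_def by simp
    also have "\<dots> \<le> (1 / real r ^ r + \<theta>) * real n ^ (r - 1) + K * (B * real n ^ (r - 1))"
      using sum_power_le_on_nonneg_sphere[OF y] Q r \<theta> \<open>K \<ge> 0\<close> unfolding s_def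
      by (intro add_mono mult_left_mono) auto
    finally have "real r * clique_poly n E r y
        \<le> real r * ((1 / real r ^ r + \<theta>) * real n ^ (r - 1) + K * (B * real n ^ (r - 1)))"
      by (simp add: mult_left_mono)
    also have "\<dots> = (1 / real r ^ (r - 1) + real r * \<theta> + real r * K * B) * real n ^ (r - 1)"
    proof -
      have "real r ^ r = real r ^ (r - 1) * real r" using r by (simp add: power_eq_if mult.commute)
      then have e: "1 / real r ^ r = 1 / real r ^ (r - 1) / real r" by simp
      have "real r * ((L / real r + \<theta>) * X + K * (B * X)) = (L + real r * \<theta> + real r * K * B) * X"
        for L X using r by (simp add: field_simps)
      then show ?thesis unfolding e .
    qed
    finally show ?thesis unfolding K_def B_def .
  qed
qed

lemma H_free_clique_poly_le:
  assumes sg: "simple_graph VH EH" and ch: "chromatic_number VH EH = Suc r" and r: "r \<ge> 2"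
    and \<epsilon>: "\<epsilon> > 0"
  shows "\<forall>\<^sub>F n in sequentially. \<forall>E. H_free n E VH EH \<longrightarrow>
           (\<forall>y\<in>nonneg_sphere n r. real r * clique_poly n E r y \<le> (1 / real r ^ (r - 1) + \<epsilon>) * real n ^ (r - 1))"
proof -
  define \<theta> where "\<theta> = \<epsilon> / (3 * real r)"
  define K where "K = real (Suc r) / \<theta>"
  define C where "C = 3 * real r * K / \<epsilon> + 1"
  define \<delta> where "\<delta> = \<epsilon> / (3 * real r * real r * K * C ^ Suc r)"
  have \<theta>: "\<theta> > 0" and K: "K > 0" using \<epsilon> r by (auto simp: \<theta>_def K_def)
  have C: "C \<ge> 1" "3 * real r * K \<le> C * \<epsilon>" using K \<epsilon> by (auto simp: C_def field_simps)
  have \<delta>: "\<delta> > 0" using \<epsilon> r K C by (simp add: \<delta>_def)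
  have "real r * \<theta> + real r * K * (C ^ Suc r * \<delta> * real r + 1 / C) \<le> \<epsilon>"
  proof -
    have "real r * \<theta> = \<epsilon> / 3" "real r * K * (C ^ Suc r * \<delta> * real r) = \<epsilon> / 3"
      using r K C by (auto simp: \<theta>_def \<delta>_def field_simps)
    moreover have "real r * K * (1 / C) \<le> \<epsilon> / 3" using C r by (simp add: field_simps)
    moreover have "real r * K * (C ^ Suc r * \<delta> * real r + 1 / C)
        = real r * K * (C ^ Suc r * \<delta> * real r) + real r * K * (1 / C)" by (rule distrib_left)
    ultimately show ?thesis by linarith
  qed
  then have bound: "1 / real r ^ (r - 1) + real r * \<theta> + real r * K * (C ^ Suc r * \<delta> * real r + 1 / C)
      \<le> 1 / real r ^ (r - 1) + \<epsilon>" by simp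
  show ?thesis
    using H_free_few_cliques[OF sg \<delta>] eventually_ge_at_top[of 1]
  proof eventually_elim
    case (elim n)
    show ?case
    proof (intro allI impI ballI)
      fix E y assume "H_free n E VH EH" and y: "y \<in> nonneg_sphere n r"
      then have "real (card (cliques n E (Suc r))) < \<delta> * real n ^ Suc r" using elim(1) unfolding ch by blast
      then have "real (card (cliques n E (Suc r))) \<le> \<delta> * real n ^ Suc r" by simp
      then have "real r * clique_poly n E r y \<le> (1 / real r ^ (r - 1) + real r * \<theta>
          + real r * K * (C ^ Suc r * \<delta> * real r + 1 / C)) * real n ^ (r - 1)"
        using clique_poly_le_of_few_cliques[OF r y _ \<theta> C(1) less_imp_le[OF \<delta>]] elim unfolding K_def by simp
      also have "\<dots> \<le> (1 / real r ^ (r - 1) + \<epsilon>) * real n ^ (r - 1)"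
        using bound by (intro mult_right_mono) auto
      finally show "real r * clique_poly n E r y \<le> (1 / real r ^ (r - 1) + \<epsilon>) * real n ^ (r - 1)" .
    qed
  qed
qed

section \<open>Lower bound and the limit\<close>

definition turan :: "nat \<Rightarrow> nat \<Rightarrow> nat \<Rightarrow> nat \<Rightarrow> bool" where
  "turan r m u v \<longleftrightarrow> u < r * m \<and> v < r * m \<and> u mod r \<noteq> v mod r"

lemma simple_graph_turan: "r * m \<le> n \<Longrightarrow> simple_graph {0..<n} (turan r m)"
  unfolding simple_graph_def turan_def by auto

lemma H_free_turan:
  assumes "r < chromatic_number VH EH" "r \<ge> 1"
  shows "H_free n (turan r m) VH EH"
  unfolding H_free_def
proof
  assume "contains_subgraph n (turan r m) VH EH"
  then obtain \<phi> where "\<forall>u\<in>VH. \<forall>v\<in>VH. EH u v \<longrightarrow> turan r m (\<phi> u) (\<phi> v)"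
    unfolding contains_subgraph_def by blast
  then have "proper_colouring VH EH r (\<lambda>v. \<phi> v mod r)"
    unfolding proper_colouring_def using assms(2) by (auto simp: turan_def)
  then have "chromatic_number VH EH \<le> r" unfolding chromatic_number_def by (intro Least_le) blast
  then show False using assms(1) by simp
qed

text \<open>Picking the vertex \<open>r f(c) + c\<close> from each residue class \<open>c\<close> modulo \<open>r\<close> gives \<open>m\<^sup>r\<close> distinct
  \<open>r\<close>-cliques of the Turan graph.\<close>
definition turan_transversal :: "nat \<Rightarrow> (nat \<Rightarrow> nat) \<Rightarrow> nat set" where
  "turan_transversal r f = (\<lambda>c. r * f c + c) ` {0..<r}"

lemma inj_on_turan_transversal: "inj_on (turan_transversal r) (PiE {0..<r} (\<lambda>_. {0..<m}))"
proof (rule inj_onI)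
  fix f1 f2 assume f1: "f1 \<in> PiE {0..<r} (\<lambda>_. {0..<m})" and f2: "f2 \<in> PiE {0..<r} (\<lambda>_. {0..<m})"
    and eq: "turan_transversal r f1 = turan_transversal r f2"
  show "f1 = f2"
  proof (rule PiE_ext[OF f1 f2])
    fix c assume c: "c \<in> {0..<r}"
    then have "r * f1 c + c \<in> turan_transversal r f2" using eq unfolding turan_transversal_def by auto
    then obtain c' where c': "c' < r" "r * f1 c + c = r * f2 c' + c'" unfolding turan_transversal_def by auto
    have "c = (r * f1 c + c) mod r" using c by simp
    also have "\<dots> = (r * f2 c' + c') mod r" unfolding c'(2) ..
    also have "\<dots> = c'" using c'(1) by simp
    finally show "f1 c = f2 c" using c' by simp
  qed
qed

lemma turan_transversal_clique:
  assumes n: "r * m \<le> n" and f: "f \<in> PiE {0..<r} (\<lambda>_. {0..<m})"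
  shows "turan_transversal r f \<subseteq> {..<r * m}" "turan_transversal r f \<in> cliques n (turan r m) r"
proof -
  have lt: "r * f c + c < r * m" if "c < r" for c
  proof -
    have "f c + 1 \<le> m" using PiE_mem[OF f, of c] that by auto
    then have "r * (f c + 1) \<le> r * m" by (rule mult_left_mono) simp
    moreover have "r * f c + c < r * (f c + 1)" using that by simp
    ultimately show ?thesis by linarith
  qed
  then show sub: "turan_transversal r f \<subseteq> {..<r * m}" unfolding turan_transversal_def by auto
  have inj: "inj_on (\<lambda>c. r * f c + c) {0..<r}"
  proof (rule inj_onI)
    fix a b assume a: "a \<in> {0..<r}" and b: "b \<in> {0..<r}" and e: "r * f a + a = r * f b + b"
    have "a = (r * f a + a) mod r" using a by simp
    also have "\<dots> = (r * f b + b) mod r" unfolding e ..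
    also have "\<dots> = b" using b by simp
    finally show "a = b" .
  qed
  show "turan_transversal r f \<in> cliques n (turan r m) r"
    unfolding cliques_def is_clique_def
  proof (intro CollectI conjI ballI impI)
    show "turan_transversal r f \<subseteq> {0..<n}" using sub n by auto
    show "card (turan_transversal r f) = r" unfolding turan_transversal_def using card_image[OF inj] by simp
    fix u v assume "u \<in> turan_transversal r f" "v \<in> turan_transversal r f" "u \<noteq> v"
    then obtain cu cv where "cu < r" "cv < r" "u = r * f cu + cu" "v = r * f cv + cv"
      unfolding turan_transversal_def by auto
    then show "turan r m u v" unfolding turan_def using lt \<open>u \<noteq> v\<close> by auto
  qed
qed

lemma turan_clique_poly_ge:
  assumes n: "r * m \<le> n"
  shows "real m ^ r \<le> clique_poly n (turan r m) r (\<lambda>i. if i < r * m then 1 else 0)"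
proof -
  let ?P = "PiE {0..<r} (\<lambda>_. {0..<m})" and ?T = "turan_transversal r ` PiE {0..<r} (\<lambda>_. {0..<m})"
  have "real m ^ r = (\<Sum>S\<in>?T. 1)"
    using card_image[OF inj_on_turan_transversal[of r m]] by (simp add: card_PiE)
  also have "\<dots> = (\<Sum>S\<in>?T. \<Prod>i\<in>S. if i < r * m then 1 else 0 :: real)"
  proof (rule sum.cong[OF refl])
    fix S assume "S \<in> ?T"
    then have "S \<subseteq> {..<r * m}" using turan_transversal_clique(1)[OF n] by blast
    then have "(\<Prod>i\<in>S. if i < r * m then 1 else 0 :: real) = 1" by (auto intro!: prod.neutral)
    then show "1 = (\<Prod>i\<in>S. if i < r * m then 1 else 0 :: real)" by simp
  qed
  also have "\<dots> \<le> clique_poly n (turan r m) r (\<lambda>i. if i < r * m then 1 else 0)"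
    unfolding clique_poly_def using turan_transversal_clique(2)[OF n]
    by (intro sum_mono2) (auto intro: prod_nonneg)
  finally show ?thesis .
qed

lemma turan_clique_spectral_radius_ge:
  assumes r: "r \<ge> 2" and m: "m \<ge> 1" and n: "r * m \<le> n"
  shows "real m ^ (r - 1) \<le> clique_spectral_radius n (turan r m) r"
proof -
  define a where "a i = (if i < r * m then 1 else (0::real))" for i
  have a0: "\<And>i. a i \<ge> 0" and an: "\<And>i. n \<le> i \<Longrightarrow> a i = 0" unfolding a_def using n by auto
  have "(\<Sum>i<n. a i ^ r) = (\<Sum>i<n. if i < r * m then 1 else 0)"
    by (rule sum.cong) (use r in \<open>auto simp: a_def\<close>)
  also have "\<dots> = real (card ({..<n} \<inter> {i. i < r * m}))" by (simp add: sum.If_cases)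
  also have "{..<n} \<inter> {i. i < r * m} = {..<r * m}" using n by auto
  also have "real (card {..<r * m}) = real (r * m)" by simp
  finally have sa: "(\<Sum>i<n. a i ^ r) = real (r * m)" .
  then have N: "(\<Sum>i<n. a i ^ r) > 0" using r m by simp
  have n1: "n \<ge> 1" using r m n by (metis le_trans mult_le_mono nat_mult_1 one_le_numeral)
  have "real m ^ r = real m * real m ^ (r - 1)" using r by (simp add: power_eq_if)
  then have "real m ^ (r - 1) = real r * (real m ^ r / real (r * m))"
    using r m by simp
  also have "\<dots> \<le> real r * (clique_poly n (turan r m) r a / (\<Sum>i<n. a i ^ r))"
    using turan_clique_poly_ge[OF n] sa r m unfolding a_def by (simp add: divide_right_mono)
  also have "\<dots> \<le> clique_spectral_radius n (turan r m) r"
    using clique_poly_le_clique_spectral_radius[OF n1 r normalize_into_nonneg_sphere(1)[OF _ a0 an N]]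
      normalize_into_nonneg_sphere(2)[OF _ a0 an N] r by simp
  finally show ?thesis .
qed

lemma clique_spectral_radius_le_power:
  assumes n: "n \<ge> 1" and r: "r \<ge> 2"
  shows "clique_spectral_radius n E r \<le> real r * real n ^ (r - 1)"
proof (rule clique_spectral_radius_le[OF n r])
  fix y assume y: "y \<in> nonneg_sphere n r"
  then have "clique_poly n E r y \<le> real n ^ (r - 1)"
    using clique_poly_le_power_sum[of y n E r] sum_power_le_on_nonneg_sphere[OF y] r
    by (force simp: nonneg_sphere_def)
  then show "real r * clique_poly n E r y \<le> real r * real n ^ (r - 1)" by (simp add: mult_left_mono)
qed

lemma ex_mu_ge:
  assumes ch: "chromatic_number VH EH = Suc r" and r: "r \<ge> 2" and n: "n \<ge> r"
  shows "real (n div r) ^ (r - 1) \<le> ex_mu r n VH EH"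
proof -
  have "r div r \<le> n div r" by (rule div_le_mono[OF n])
  then have m: "n div r \<ge> 1" using r by simp
  have "real (n div r) ^ (r - 1) \<le> clique_spectral_radius n (turan r (n div r)) r"
    using turan_clique_spectral_radius_ge[OF r m] by simp
  also have "\<dots> \<le> ex_mu r n VH EH"
    unfolding ex_mu_def
  proof (rule cSup_upper)
    show "clique_spectral_radius n (turan r (n div r)) r
        \<in> {clique_spectral_radius n E r | E. simple_graph {0..<n} E \<and> H_free n E VH EH}"
      using simple_graph_turan[of r "n div r" n] H_free_turan[of r VH EH] ch r by auto
    show "bdd_above {clique_spectral_radius n E r | E. simple_graph {0..<n} E \<and> H_free n E VH EH}"
      using clique_spectral_radius_le_power[of n r] n r by (intro bdd_aboveI[of _ "real r * real n ^ (r - 1)"]) auto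
  qed
  finally show ?thesis .
qed

lemma ex_mu_le_eventually:
  assumes sg: "simple_graph VH EH" and ch: "chromatic_number VH EH = Suc r" and r: "r \<ge> 2"
    and \<epsilon>: "\<epsilon> > 0"
  shows "\<forall>\<^sub>F n in sequentially. ex_mu r n VH EH / real n ^ (r - 1) \<le> 1 / real r ^ (r - 1) + \<epsilon>"
  using H_free_clique_poly_le[OF sg ch r \<epsilon>] eventually_ge_at_top[of r]
proof eventually_elim
  case (elim n)
  have "ex_mu r n VH EH \<le> (1 / real r ^ (r - 1) + \<epsilon>) * real n ^ (r - 1)"
    unfolding ex_mu_def
  proof (rule cSup_least)
    show "{clique_spectral_radius n E r | E. simple_graph {0..<n} E \<and> H_free n E VH EH} \<noteq> {}"
      using simple_graph_turan[of r "n div r" n] H_free_turan[of r VH EH] ch r by auto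
  next
    fix x assume "x \<in> {clique_spectral_radius n E r | E. simple_graph {0..<n} E \<and> H_free n E VH EH}"
    then show "x \<le> (1 / real r ^ (r - 1) + \<epsilon>) * real n ^ (r - 1)"
      using clique_spectral_radius_le[of n r] elim r by fastforce
  qed
  moreover have "real n ^ (r - 1) > 0" using elim(2) r by simp
  ultimately show ?case by (simp only: pos_divide_le_eq)
qed

lemma tendsto_real_div_over:
  assumes "r > 0"
  shows "(\<lambda>n. real (n div r) / real n) \<longlonglongrightarrow> 1 / real r"
proof (rule tendsto_sandwich)
  show "(\<lambda>n. 1 / real r - 1 / real n) \<longlonglongrightarrow> 1 / real r"
    using tendsto_diff[OF tendsto_const lim_1_over_n] by simp
  show "\<forall>\<^sub>F n in sequentially. 1 / real r - 1 / real n \<le> real (n div r) / real n"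
  proof (intro eventually_sequentiallyI)
    fix n :: nat assume "n \<ge> 1"
    have "real n = real r * real (n div r) + real (n mod r)"
      by (metis of_nat_add of_nat_mult div_mult_mod_eq mult.commute)
    moreover have "real (n mod r) < real r" using assms by simp
    ultimately have "real n / real r - 1 \<le> real (n div r)"
      using assms by (simp add: field_simps)
    then have "(real n / real r - 1) / real n \<le> real (n div r) / real n"
      by (simp add: divide_right_mono)
    moreover have "(real n / real r - 1) / real n = 1 / real r - 1 / real n"
      using assms \<open>n \<ge> 1\<close> by (simp add: field_simps)
    ultimately show "1 / real r - 1 / real n \<le> real (n div r) / real n" by simp
  qed
  show "\<forall>\<^sub>F n in sequentially. real (n div r) / real n \<le> 1 / real r"
  proof (intro always_eventually allI)
    fix n :: nat
    have "real r * real (n div r) \<le> real n"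
      by (metis of_nat_le_iff of_nat_mult times_div_less_eq_dividend)
    then show "real (n div r) / real n \<le> 1 / real r"
      using assms by (cases "n = 0") (auto simp: field_simps)
  qed
qed simp

lemma tendsto_squeeze_eps:
  fixes f l :: "'b \<Rightarrow> real"
  assumes l: "(l \<longlongrightarrow> L) F" and lower: "\<forall>\<^sub>F x in F. l x \<le> f x"
    and upper: "\<And>\<epsilon>. \<epsilon> > 0 \<Longrightarrow> \<forall>\<^sub>F x in F. f x \<le> L + \<epsilon>"
  shows "(f \<longlongrightarrow> L) F"
proof (rule order_tendstoI)
  fix a assume "a < L"
  from order_tendstoD(1)[OF l this] lower show "\<forall>\<^sub>F x in F. a < f x"
    by eventually_elim simp
next
  fix a assume "L < a"
  then have pos: "(a - L) / 2 > 0" and bound: "L + (a - L) / 2 < a" by (simp_all add: field_simps)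
  from upper[OF pos] show "\<forall>\<^sub>F x in F. f x < a"
  proof (rule eventually_mono)
    fix x assume "f x \<le> L + (a - L) / 2"
    then show "f x < a" using bound by (rule le_less_trans)
  qed
qed

theorem theorem3:
  fixes r :: nat and VH :: "'a set" and EH :: "'a \<Rightarrow> 'a \<Rightarrow> bool"
  assumes "r \<ge> 2"
    and "simple_graph VH EH"
    and "chromatic_number VH EH = r + 1"
  shows "(\<lambda>n. ex_mu r n VH EH / real n ^ (r - 1)) \<longlonglongrightarrow> 1 / real r ^ (r - 1)"
proof -
  have r: "r \<ge> 2" and ch: "chromatic_number VH EH = Suc r" using assms by auto
  show ?thesis
  proof (rule tendsto_squeeze_eps)
    show "(\<lambda>n. (real (n div r) / real n) ^ (r - 1)) \<longlonglongrightarrow> 1 / real r ^ (r - 1)"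
      using tendsto_power[OF tendsto_real_div_over, of r "r - 1"] r by (simp add: power_one_over)
    show "\<forall>\<^sub>F n in sequentially. (real (n div r) / real n) ^ (r - 1) \<le> ex_mu r n VH EH / real n ^ (r - 1)"
      using eventually_ge_at_top[of r]
    proof (rule eventually_mono)
      fix n assume "r \<le> n"
      then show "(real (n div r) / real n) ^ (r - 1) \<le> ex_mu r n VH EH / real n ^ (r - 1)"
        unfolding power_divide by (intro divide_right_mono ex_mu_ge[OF ch r]) auto
    qed
    show "\<forall>\<^sub>F n in sequentially. ex_mu r n VH EH / real n ^ (r - 1) \<le> 1 / real r ^ (r - 1) + \<epsilon>"
      if "\<epsilon> > 0" for \<epsilon>
      using ex_mu_le_eventually[OF assms(2) ch r that] .
  qed
qed

end
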